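(* Let $\boldsymbol{\Lambda}=\mathrm{diag}(\lambda_1,\dots,\lambda_N)$ with $\lambda_i\ge0$ and $\boldsymbol{\lambda}=(\lambda_1,\dots,\lambda_N)$ with $\|\boldsymbol{\lambda}\|_2>0$, and let $S\in\mathbb{R}^{N\times n}$, $n\le N$, have i.i.d. $\mathcal{N}(0,1)$ entries. Then for $t<1$, $$(1-t)\sqrt{\textstyle\sum_{i=1}^N\lambda_i^2}\le s_{\min}(\boldsymbol{\Lambda}S)\le s_{\max}(\boldsymbol{\Lambda}S)\le(1+t)\sqrt{\textstyle\sum_{i=1}^N\lambda_i^2}$$ with probability at least $1-9^n\cdot2\exp\!\left(-\min\left\{\frac1{16}\frac{\|\boldsymbol{\lambda}\|_2^4}{\|\boldsymbol{\lambda}\|_4^4}t^2,\ \frac14\frac{\|\boldsymbol{\lambda}\|_2^2}{\|\boldsymbol{\lambda}\|_\infty^2}t\right\}\right)$.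
   Context: $s_{\min}$ and $s_{\max}$ denote the smallest and largest singular values of an $N\times n$ matrix ($n\le N$); $\|\cdot\|_q$ are the vector $\ell_q$ norms. *)

theory Defs
  imports "HOL-Probability.Probability"
begin

text \<open>An N x n real matrix is represented as A :: nat => nat => real, entry (i,j)
  for i < N, j < n.  Vectors of length k are nat => real restricted to indices < k.\<close>

definition mat_vec_norm :: "nat \<Rightarrow> nat \<Rightarrow> (nat \<Rightarrow> nat \<Rightarrow> real) \<Rightarrow> (nat \<Rightarrow> real) \<Rightarrow> real" where
  "mat_vec_norm N n A x = sqrt (\<Sum>i<N. (\<Sum>j<n. A i j * x j)\<^sup>2)"

definition unit_vecs :: "nat \<Rightarrow> (nat \<Rightarrow> real) set" where
  "unit_vecs n = {x. (\<Sum>j<n. (x j)\<^sup>2) = 1 \<and> (\<forall>j\<ge>n. x j = 0)}"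

definition s_min :: "nat \<Rightarrow> nat \<Rightarrow> (nat \<Rightarrow> nat \<Rightarrow> real) \<Rightarrow> real" where
  "s_min N n A = (INF x\<in>unit_vecs n. mat_vec_norm N n A x)"

definition s_max :: "nat \<Rightarrow> nat \<Rightarrow> (nat \<Rightarrow> nat \<Rightarrow> real) \<Rightarrow> real" where
  "s_max N n A = (SUP x\<in>unit_vecs n. mat_vec_norm N n A x)"

definition l2_norm :: "nat \<Rightarrow> (nat \<Rightarrow> real) \<Rightarrow> real" where
  "l2_norm N v = sqrt (\<Sum>i<N. (v i)\<^sup>2)"

definition l4_norm :: "nat \<Rightarrow> (nat \<Rightarrow> real) \<Rightarrow> real" where
  "l4_norm N v = root 4 (\<Sum>i<N. (v i) ^ 4)"

definition linf_norm :: "nat \<Rightarrow> (nat \<Rightarrow> real) \<Rightarrow> real" where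
  "linf_norm N v = Max ((\<lambda>i. \<bar>v i\<bar>) ` {..<N})"

end

(*
  For a fixed unit vector y the coordinates of S y are independent standard normals, so
  |Lambda S y|^2 = sum_i lambda_i^2 g_i^2 is a weighted chi-square sum. Chernoff bounds for it
  (in the form of Laurent and Massart) show that (1 - t/2) |lambda|^2 <= |Lambda S y|^2 <=
  (1 + t) |lambda|^2 fails with probability at most 2 exp (-x), x the exponent of the bound,
  and a union bound extends this to a 1/4-net of the unit sphere, which by a volume argument
  has at most 9^n points.

  To pass from the net to the sphere, the net is applied to the positive semidefinite forms
  s_max^2 |w|^2 - |A w|^2 and |A w|^2 - s_min^2 |w|^2, both bounded by kappa |w|^2 with
  kappa = s_max^2 - s_min^2. This gives s_max^2 <= (1 + t) |lambda|^2 + kappa / 16 and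
  s_min^2 >= (1 - t/2) |lambda|^2 - kappa / 16, which together yield the claim.
*)

theory Submission
  imports Defs
begin

section \<open>Vectors, matrices and singular values\<close>

lemma l2_norm_eq_L2_set: "l2_norm n x = L2_set x {..<n}"
  by (simp add: l2_norm_def L2_set_def)

lemma l2_norm_nonneg: "0 \<le> l2_norm n x"
  by (simp add: l2_norm_def sum_nonneg)

lemma l2_norm_sq: "(l2_norm n x)\<^sup>2 = (\<Sum>j<n. (x j)\<^sup>2)"
  by (simp add: l2_norm_def sum_nonneg)

lemma l2_norm_add_le: "l2_norm n (\<lambda>j. x j + y j) \<le> l2_norm n x + l2_norm n y"
  unfolding l2_norm_eq_L2_set by (rule L2_set_triangle_ineq)

lemma l2_norm_minus_commute: "l2_norm n (\<lambda>j. x j - y j) = l2_norm n (\<lambda>j. y j - x j)"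
  unfolding l2_norm_def by (simp add: power2_commute)

lemma l2_norm_scale: "l2_norm n (\<lambda>j. c * x j) = \<bar>c\<bar> * l2_norm n x"
  by (simp add: l2_norm_def power_mult_distrib sum_distrib_left[symmetric] real_sqrt_mult)

lemma l2_norm_lin_comb_sq:
  "(l2_norm n (\<lambda>j. a * x j + b * y j))\<^sup>2
     = a\<^sup>2 * (l2_norm n x)\<^sup>2 + 2 * a * b * (\<Sum>j<n. x j * y j) + b\<^sup>2 * (l2_norm n y)\<^sup>2"
  unfolding l2_norm_sq
  by (simp add: power2_eq_square algebra_simps sum.distrib sum_distrib_left)

lemma abs_le_l2_norm: "j < n \<Longrightarrow> \<bar>x j\<bar> \<le> l2_norm n x"
  unfolding l2_norm_def by (rule real_le_rsqrt) (auto intro: member_le_sum)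

lemma l4_norm_pow4: "l4_norm N v ^ 4 = (\<Sum>i<N. (v i) ^ 4)"
proof -
  have "0 \<le> (\<Sum>i<N. (v i) ^ 4)" by (intro sum_nonneg) (simp add: zero_le_even_power)
  then show ?thesis by (simp add: l4_norm_def real_root_pow_pos2)
qed

lemma abs_le_linf_norm: "i < N \<Longrightarrow> \<bar>v i\<bar> \<le> linf_norm N v"
  unfolding linf_norm_def by (intro Max_ge) auto

lemma l2_norm_pos_obtains_nonzero:
  assumes "l2_norm N v > 0"
  obtains i where "i < N" "v i \<noteq> 0"
proof -
  have "(\<Sum>i<N. (v i)\<^sup>2) \<noteq> 0" using assms by (auto simp: l2_norm_def)
  then show ?thesis using that by (metis (no_types, lifting) lessThan_iff power_zero_numeral sum.neutral)
qed

lemma sum_pow4_pos: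
  assumes "l2_norm N v > 0"
  shows "(\<Sum>i<N. ((v i)\<^sup>2)\<^sup>2) > 0"
proof -
  obtain i where "i < N" "v i \<noteq> 0" using l2_norm_pos_obtains_nonzero[OF assms] .
  then show ?thesis by (intro sum_pos2[of _ i]) auto
qed

lemma linf_norm_pos:
  assumes "l2_norm N v > 0"
  shows "linf_norm N v > 0"
proof -
  obtain i where "i < N" "v i \<noteq> 0" using l2_norm_pos_obtains_nonzero[OF assms] .
  moreover have "\<bar>v i\<bar> \<le> linf_norm N v" using \<open>i < N\<close> by (rule abs_le_linf_norm)
  ultimately show ?thesis by linarith
qed

definition mat_vec :: "nat \<Rightarrow> (nat \<Rightarrow> nat \<Rightarrow> real) \<Rightarrow> (nat \<Rightarrow> real) \<Rightarrow> nat \<Rightarrow> real" where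
  "mat_vec n A x i = (\<Sum>j<n. A i j * x j)"

definition frobenius_norm :: "nat \<Rightarrow> nat \<Rightarrow> (nat \<Rightarrow> nat \<Rightarrow> real) \<Rightarrow> real" where
  "frobenius_norm N n A = sqrt (\<Sum>i<N. \<Sum>j<n. (A i j)\<^sup>2)"

lemma mat_vec_norm_eq_l2_norm: "mat_vec_norm N n A x = l2_norm N (mat_vec n A x)"
  by (simp add: mat_vec_norm_def l2_norm_def mat_vec_def)

lemma mat_vec_lin_comb:
  "mat_vec n A (\<lambda>j. a * x j + b * y j) = (\<lambda>i. a * mat_vec n A x i + b * mat_vec n A y i)"
  by (simp add: mat_vec_def fun_eq_iff algebra_simps sum.distrib sum_distrib_left)

lemma mat_vec_norm_nonneg: "0 \<le> mat_vec_norm N n A x"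
  by (simp add: mat_vec_norm_eq_l2_norm l2_norm_nonneg)

lemma mat_vec_norm_lin_comb_sq:
  "(mat_vec_norm N n A (\<lambda>j. a * x j + b * y j))\<^sup>2
     = a\<^sup>2 * (mat_vec_norm N n A x)\<^sup>2 + 2 * a * b * (\<Sum>i<N. mat_vec n A x i * mat_vec n A y i)
       + b\<^sup>2 * (mat_vec_norm N n A y)\<^sup>2"
  by (simp add: mat_vec_norm_eq_l2_norm mat_vec_lin_comb l2_norm_lin_comb_sq)

lemma mat_vec_norm_add_le:
  "mat_vec_norm N n A (\<lambda>j. x j + y j) \<le> mat_vec_norm N n A x + mat_vec_norm N n A y"
  using mat_vec_lin_comb[of n A 1 x 1 y] l2_norm_add_le
  by (simp add: mat_vec_norm_eq_l2_norm)

lemma mat_vec_norm_scale: "mat_vec_norm N n A (\<lambda>j. c * x j) = \<bar>c\<bar> * mat_vec_norm N n A x"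
  using mat_vec_lin_comb[of n A c x 0 x] l2_norm_scale
  by (simp add: mat_vec_norm_eq_l2_norm)

lemma mat_vec_norm_restrict:
  "mat_vec_norm N n A (\<lambda>j. if j < n then x j else 0) = mat_vec_norm N n A x"
  by (simp add: mat_vec_norm_def)

lemma mat_vec_norm_row_scaled_sq:
  "(mat_vec_norm N n (\<lambda>i j. lam i * S i j) y)\<^sup>2 = (\<Sum>i<N. (lam i)\<^sup>2 * (mat_vec n S y i)\<^sup>2)"
  by (simp add: mat_vec_norm_eq_l2_norm l2_norm_sq mat_vec_def mult.assoc power_mult_distrib
      flip: sum_distrib_left)

lemma mat_vec_norm_le_frobenius:
  "mat_vec_norm N n A x \<le> frobenius_norm N n A * l2_norm n x"
proof -
  have "(mat_vec n A x i)\<^sup>2 \<le> (\<Sum>j<n. (A i j)\<^sup>2) * (l2_norm n x)\<^sup>2" for i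
  proof -
    have "\<bar>mat_vec n A x i\<bar> \<le> (\<Sum>j<n. \<bar>A i j\<bar> * \<bar>x j\<bar>)"
      unfolding mat_vec_def by (rule order_trans[OF sum_abs]) (simp add: abs_mult)
    also have "\<dots> \<le> L2_set (A i) {..<n} * l2_norm n x"
      unfolding l2_norm_eq_L2_set by (rule L2_set_mult_ineq)
    finally have "\<bar>mat_vec n A x i\<bar>\<^sup>2 \<le> (L2_set (A i) {..<n} * l2_norm n x)\<^sup>2"
      by (intro power_mono) auto
    then show ?thesis
      by (simp add: L2_set_def power_mult_distrib sum_nonneg)
  qed
  then have "(mat_vec_norm N n A x)\<^sup>2 \<le> (\<Sum>i<N. (\<Sum>j<n. (A i j)\<^sup>2) * (l2_norm n x)\<^sup>2)"
    unfolding mat_vec_norm_eq_l2_norm l2_norm_sq by (rule sum_mono)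
  also have "\<dots> = (frobenius_norm N n A * l2_norm n x)\<^sup>2"
    by (simp add: frobenius_norm_def power_mult_distrib sum_distrib_right sum_nonneg)
  finally show ?thesis
    by (rule power2_le_imp_le) (simp add: frobenius_norm_def l2_norm_nonneg sum_nonneg)
qed

lemma l2_norm_unit_vecs: "x \<in> unit_vecs n \<Longrightarrow> l2_norm n x = 1"
  by (simp add: unit_vecs_def l2_norm_def)

lemma unit_vecs_nonempty:
  assumes "1 \<le> n" shows "unit_vecs n \<noteq> {}"
proof -
  have "(\<Sum>j<n. (if j = 0 then 1 else 0 :: real)\<^sup>2) = (\<Sum>j<n. if j = 0 then 1 else 0)"
    by (rule sum.cong) auto
  also have "\<dots> = 1" using assms by simp
  finally have "(\<Sum>j<n. (if j = 0 then 1 else 0 :: real)\<^sup>2) = 1" .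
  then have "(\<lambda>j. if j = 0 then 1 else 0) \<in> unit_vecs n"
    using assms by (auto simp: unit_vecs_def)
  then show ?thesis by blast
qed

lemma bdd_above_mat_vec_norm_unit_vecs: "bdd_above (mat_vec_norm N n A ` unit_vecs n)"
proof (rule bdd_aboveI[where M = "frobenius_norm N n A"])
  fix y assume "y \<in> mat_vec_norm N n A ` unit_vecs n"
  then obtain x where "x \<in> unit_vecs n" "y = mat_vec_norm N n A x" by blast
  then show "y \<le> frobenius_norm N n A"
    using mat_vec_norm_le_frobenius[of N n A x] by (simp add: l2_norm_unit_vecs)
qed

lemma bdd_below_mat_vec_norm_unit_vecs: "bdd_below (mat_vec_norm N n A ` unit_vecs n)"
  by (auto intro!: bdd_belowI[where m = 0] simp: mat_vec_norm_nonneg)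

lemma s_min_le: "x \<in> unit_vecs n \<Longrightarrow> s_min N n A \<le> mat_vec_norm N n A x"
  unfolding s_min_def by (rule cINF_lower[OF bdd_below_mat_vec_norm_unit_vecs])

lemma s_max_ge: "x \<in> unit_vecs n \<Longrightarrow> mat_vec_norm N n A x \<le> s_max N n A"
  unfolding s_max_def by (rule cSUP_upper[OF _ bdd_above_mat_vec_norm_unit_vecs])

lemma s_min_nonneg: "1 \<le> n \<Longrightarrow> 0 \<le> s_min N n A"
  unfolding s_min_def by (intro cINF_greatest unit_vecs_nonempty mat_vec_norm_nonneg)

lemma s_min_le_s_max: "1 \<le> n \<Longrightarrow> s_min N n A \<le> s_max N n A"
  using unit_vecs_nonempty s_min_le s_max_ge by (meson order_trans ex_in_conv)

lemma s_min_s_max_bounds: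
  assumes "1 \<le> n"
  shows "s_min N n A * l2_norm n w \<le> mat_vec_norm N n A w"
    and "mat_vec_norm N n A w \<le> s_max N n A * l2_norm n w"
proof -
  have "s_min N n A * l2_norm n w \<le> mat_vec_norm N n A w
      \<and> mat_vec_norm N n A w \<le> s_max N n A * l2_norm n w"
  proof (cases "l2_norm n w = 0")
    case True
    then have "mat_vec_norm N n A w = 0"
      using mat_vec_norm_le_frobenius[of N n A w] mat_vec_norm_nonneg[of N n A w] by simp
    then show ?thesis using True by simp
  next
    case False
    define r where "r = l2_norm n w"
    have r: "r > 0" using False l2_norm_nonneg[of n w] by (simp add: r_def)
    define x where "x j = (if j < n then 1 / r * w j else 0)" for j
    have "l2_norm n x = l2_norm n (\<lambda>j. 1 / r * w j)"
      by (simp add: x_def l2_norm_def)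
    then have "l2_norm n x = 1"
      using l2_norm_scale[of n "1 / r" w] r by (simp add: r_def)
    then have x: "x \<in> unit_vecs n"
      by (simp add: unit_vecs_def x_def l2_norm_def)
    have "mat_vec_norm N n A x = mat_vec_norm N n A w / r"
      using mat_vec_norm_restrict[of N n A "\<lambda>j. 1 / r * w j"] mat_vec_norm_scale[of N n A "1 / r" w] r
      unfolding x_def by simp
    then show ?thesis
      using s_min_le[OF x, of N A] s_max_ge[OF x, of N A] r
      by (simp add: r_def pos_le_divide_eq pos_divide_le_eq)
  qed
  then show "s_min N n A * l2_norm n w \<le> mat_vec_norm N n A w"
    and "mat_vec_norm N n A w \<le> s_max N n A * l2_norm n w" by auto
qed

lemma s_min_s_max_sq_bounds:
  assumes "1 \<le> n"
  shows "(s_min N n A)\<^sup>2 * (l2_norm n w)\<^sup>2 \<le> (mat_vec_norm N n A w)\<^sup>2"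
    and "(mat_vec_norm N n A w)\<^sup>2 \<le> (s_max N n A)\<^sup>2 * (l2_norm n w)\<^sup>2"
  using power_mono[OF s_min_s_max_bounds(1)[OF assms, of N A w]]
    power_mono[OF s_min_s_max_bounds(2)[OF assms, of N A w]]
    s_min_nonneg[OF assms, of N A] l2_norm_nonneg[of n w] mat_vec_norm_nonneg[of N n A w]
  by (simp_all add: power_mult_distrib)

lemma s_max_sq_approx:
  assumes "1 \<le> n" "e > 0"
  shows "\<exists>x\<in>unit_vecs n. (s_max N n A)\<^sup>2 - (mat_vec_norm N n A x)\<^sup>2 \<le> e"
proof (cases "(s_max N n A)\<^sup>2 \<le> e")
  case True
  obtain x where "x \<in> unit_vecs n" using unit_vecs_nonempty[OF assms(1)] by blast
  moreover have "(s_max N n A)\<^sup>2 - (mat_vec_norm N n A x)\<^sup>2 \<le> e"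
    using True zero_le_power2[of "mat_vec_norm N n A x"] by linarith
  ultimately show ?thesis by blast
next
  case False
  have "sqrt ((s_max N n A)\<^sup>2 - e) < s_max N n A"
    using assms False s_min_le_s_max[of n N A] s_min_nonneg[of n N A]
    by (simp add: real_sqrt_less_iff real_less_lsqrt)
  then obtain x where "x \<in> unit_vecs n" "sqrt ((s_max N n A)\<^sup>2 - e) < mat_vec_norm N n A x"
    unfolding s_max_def
    using less_cSUP_iff[OF unit_vecs_nonempty[OF assms(1)] bdd_above_mat_vec_norm_unit_vecs] by blast
  then show ?thesis
    by (intro bexI[of _ x]) (auto dest!: less_imp_le sqrt_le_D)
qed

lemma s_min_sq_approx:
  assumes "1 \<le> n" "e > 0"
  shows "\<exists>x\<in>unit_vecs n. (mat_vec_norm N n A x)\<^sup>2 - (s_min N n A)\<^sup>2 \<le> e"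
proof -
  have "s_min N n A < sqrt ((s_min N n A)\<^sup>2 + e)"
    using assms s_min_nonneg[of n N A] by (simp add: real_less_rsqrt)
  then obtain x where "x \<in> unit_vecs n" "mat_vec_norm N n A x < sqrt ((s_min N n A)\<^sup>2 + e)"
    unfolding s_min_def
    using cINF_less_iff[OF unit_vecs_nonempty[OF assms(1)] bdd_below_mat_vec_norm_unit_vecs] by blast
  moreover have "(mat_vec_norm N n A x)\<^sup>2 \<le> (sqrt ((s_min N n A)\<^sup>2 + e))\<^sup>2"
    using calculation(2) mat_vec_norm_nonneg[of N n A x] by (intro power_mono) auto
  ultimately show ?thesis using assms(2) by (intro bexI[of _ x]) auto
qed

section \<open>Extreme singular values from a net\<close>

lemma quadratic_form_add_le:
  fixes F :: "(nat \<Rightarrow> real) \<Rightarrow> real"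
  assumes polar: "\<And>a b x y. F (\<lambda>j. a * x j + b * y j) = a\<^sup>2 * F x + 2 * a * b * B x y + b\<^sup>2 * F y"
    and nonneg: "\<And>x. 0 \<le> F x"
    and "\<theta> > 0"
  shows "F (\<lambda>j. x j + d j) \<le> (1 + 1 / \<theta>) * F x + (1 + \<theta>) * F d"
proof -
  define a where "a = 1 / sqrt \<theta>"
  have "0 \<le> F (\<lambda>j. a * x j + (- 1 / a) * d j)" by (rule nonneg)
  also have "\<dots> = a\<^sup>2 * F x + 2 * a * (- 1 / a) * B x d + (- 1 / a)\<^sup>2 * F d" by (rule polar)
  also have "\<dots> = F x / \<theta> - 2 * B x d + \<theta> * F d"
    using \<open>\<theta> > 0\<close> by (simp add: a_def power_divide)
  finally have "2 * B x d \<le> F x / \<theta> + \<theta> * F d" by simp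
  moreover have "F (\<lambda>j. x j + d j) = F x + 2 * B x d + F d"
    using polar[of 1 x 1 d] by simp
  ultimately show ?thesis by (simp add: algebra_simps)
qed

lemma quadratic_form_net_bound:
  fixes F :: "(nat \<Rightarrow> real) \<Rightarrow> real"
  assumes polar: "\<And>a b x y. F (\<lambda>j. a * x j + b * y j) = a\<^sup>2 * F x + 2 * a * b * B x y + b\<^sup>2 * F y"
    and nonneg: "\<And>x. 0 \<le> F x"
    and bounded: "\<And>d. F d \<le> \<kappa> * (l2_norm n d)\<^sup>2" and "0 \<le> \<kappa>"
    and near_zero: "\<And>e. e > 0 \<Longrightarrow> \<exists>x\<in>U. F x \<le> e"
    and cover: "\<And>x. x \<in> U \<Longrightarrow> \<exists>y\<in>Net. l2_norm n (\<lambda>j. y j - x j) \<le> \<epsilon>"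
    and lower: "\<And>y. y \<in> Net \<Longrightarrow> c \<le> F y"
  shows "c \<le> \<kappa> * \<epsilon>\<^sup>2"
proof (rule tendsto_lowerbound)
  show "((\<lambda>\<theta>. \<theta> + \<theta>\<^sup>2 + (1 + \<theta>) * (\<kappa> * \<epsilon>\<^sup>2)) \<longlongrightarrow> \<kappa> * \<epsilon>\<^sup>2) (at_right 0)"
    by (auto intro!: tendsto_eq_intros)
  show "\<forall>\<^sub>F \<theta> in at_right 0. c \<le> \<theta> + \<theta>\<^sup>2 + (1 + \<theta>) * (\<kappa> * \<epsilon>\<^sup>2)"
  proof (rule eventually_at_rightI[of 0 1])
    fix \<theta> :: real assume "\<theta> \<in> {0<..<1}"
    then have "\<theta> > 0" by simp
    then obtain x where "x \<in> U" and Fx: "F x \<le> \<theta>\<^sup>2" using near_zero[of "\<theta>\<^sup>2"] by auto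
    then obtain y where "y \<in> Net" and dist: "l2_norm n (\<lambda>j. y j - x j) \<le> \<epsilon>" using cover by blast
    have "F (\<lambda>j. y j - x j) \<le> \<kappa> * \<epsilon>\<^sup>2"
      using bounded[of "\<lambda>j. y j - x j"] dist l2_norm_nonneg \<open>0 \<le> \<kappa>\<close>
      by (meson mult_left_mono order_trans power_mono)
    have "c \<le> F (\<lambda>j. x j + (y j - x j))" using lower[OF \<open>y \<in> Net\<close>] by simp
    also have "\<dots> \<le> (1 + 1 / \<theta>) * F x + (1 + \<theta>) * F (\<lambda>j. y j - x j)"
      by (rule quadratic_form_add_le[OF polar nonneg \<open>\<theta> > 0\<close>])
    also have "\<dots> \<le> (1 + 1 / \<theta>) * \<theta>\<^sup>2 + (1 + \<theta>) * (\<kappa> * \<epsilon>\<^sup>2)"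
      using Fx \<open>F (\<lambda>j. y j - x j) \<le> \<kappa> * \<epsilon>\<^sup>2\<close> \<open>\<theta> > 0\<close>
      by (intro add_mono mult_left_mono) auto
    also have "\<dots> = \<theta> + \<theta>\<^sup>2 + (1 + \<theta>) * (\<kappa> * \<epsilon>\<^sup>2)"
      using \<open>\<theta> > 0\<close> by (simp add: power2_eq_square field_simps)
    finally show "c \<le> \<theta> + \<theta>\<^sup>2 + (1 + \<theta>) * (\<kappa> * \<epsilon>\<^sup>2)" .
  qed simp
qed simp

lemma s_max_sq_le_of_net:
  assumes "1 \<le> n" "Net \<subseteq> unit_vecs n"
    and cover: "\<And>x. x \<in> unit_vecs n \<Longrightarrow> \<exists>y\<in>Net. l2_norm n (\<lambda>j. y j - x j) \<le> \<epsilon>"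
    and net: "\<And>y. y \<in> Net \<Longrightarrow> (mat_vec_norm N n A y)\<^sup>2 \<le> \<beta>"
  shows "(s_max N n A)\<^sup>2 - \<beta> \<le> ((s_max N n A)\<^sup>2 - (s_min N n A)\<^sup>2) * \<epsilon>\<^sup>2"
proof (rule quadratic_form_net_bound)
  let ?P = "(s_max N n A)\<^sup>2" and ?Q = "(s_min N n A)\<^sup>2"
  let ?F = "\<lambda>w. ?P * (l2_norm n w)\<^sup>2 - (mat_vec_norm N n A w)\<^sup>2"
  show "?F (\<lambda>j. a * x j + b * y j) = a\<^sup>2 * ?F x + 2 * a * b *
      (?P * (\<Sum>j<n. x j * y j) - (\<Sum>i<N. mat_vec n A x i * mat_vec n A y i)) + b\<^sup>2 * ?F y"
    for a b x y by (simp add: l2_norm_lin_comb_sq mat_vec_norm_lin_comb_sq algebra_simps)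
  show "0 \<le> ?F w" for w
    using s_min_s_max_sq_bounds(2)[OF \<open>1 \<le> n\<close>] by simp
  show "?F d \<le> (?P - ?Q) * (l2_norm n d)\<^sup>2" for d
    using s_min_s_max_sq_bounds(1)[OF \<open>1 \<le> n\<close>, of N A d] by (simp add: algebra_simps)
  show "0 \<le> ?P - ?Q"
    using s_min_le_s_max[OF \<open>1 \<le> n\<close>] s_min_nonneg[OF \<open>1 \<le> n\<close>] by (simp add: power_mono)
  show "\<exists>x\<in>unit_vecs n. ?F x \<le> e" if "e > 0" for e
    using s_max_sq_approx[OF \<open>1 \<le> n\<close> that, of N A]
    by (metis l2_norm_unit_vecs mult.right_neutral power_one)
  show "?P - \<beta> \<le> ?F y" if "y \<in> Net" for y
    using net[OF that] that \<open>Net \<subseteq> unit_vecs n\<close> by (auto simp: l2_norm_unit_vecs)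
qed (rule cover)

lemma s_min_sq_ge_of_net:
  assumes "1 \<le> n" "Net \<subseteq> unit_vecs n"
    and cover: "\<And>x. x \<in> unit_vecs n \<Longrightarrow> \<exists>y\<in>Net. l2_norm n (\<lambda>j. y j - x j) \<le> \<epsilon>"
    and net: "\<And>y. y \<in> Net \<Longrightarrow> \<alpha> \<le> (mat_vec_norm N n A y)\<^sup>2"
  shows "\<alpha> - (s_min N n A)\<^sup>2 \<le> ((s_max N n A)\<^sup>2 - (s_min N n A)\<^sup>2) * \<epsilon>\<^sup>2"
proof (rule quadratic_form_net_bound)
  let ?P = "(s_max N n A)\<^sup>2" and ?Q = "(s_min N n A)\<^sup>2"
  let ?F = "\<lambda>w. (mat_vec_norm N n A w)\<^sup>2 - ?Q * (l2_norm n w)\<^sup>2"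
  show "?F (\<lambda>j. a * x j + b * y j) = a\<^sup>2 * ?F x + 2 * a * b *
      ((\<Sum>i<N. mat_vec n A x i * mat_vec n A y i) - ?Q * (\<Sum>j<n. x j * y j)) + b\<^sup>2 * ?F y"
    for a b x y by (simp add: l2_norm_lin_comb_sq mat_vec_norm_lin_comb_sq algebra_simps)
  show "0 \<le> ?F w" for w
    using s_min_s_max_sq_bounds(1)[OF \<open>1 \<le> n\<close>] by simp
  show "?F d \<le> (?P - ?Q) * (l2_norm n d)\<^sup>2" for d
    using s_min_s_max_sq_bounds(2)[OF \<open>1 \<le> n\<close>, of N A d] by (simp add: algebra_simps)
  show "0 \<le> ?P - ?Q"
    using s_min_le_s_max[OF \<open>1 \<le> n\<close>] s_min_nonneg[OF \<open>1 \<le> n\<close>] by (simp add: power_mono)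
  show "\<exists>x\<in>unit_vecs n. ?F x \<le> e" if "e > 0" for e
    using s_min_sq_approx[OF \<open>1 \<le> n\<close> that, of N A]
    by (metis l2_norm_unit_vecs mult.right_neutral power_one)
  show "\<alpha> - ?Q \<le> ?F y" if "y \<in> Net" for y
    using net[OF that] that \<open>Net \<subseteq> unit_vecs n\<close> by (auto simp: l2_norm_unit_vecs)
qed (rule cover)

lemma singular_values_bounds_of_net:
  assumes "1 \<le> n" "0 < t" "t < 1" "0 \<le> \<sigma>" "Net \<subseteq> unit_vecs n"
    and cover: "\<And>x. x \<in> unit_vecs n \<Longrightarrow> \<exists>y\<in>Net. l2_norm n (\<lambda>j. y j - x j) \<le> 1 / 4"
    and net: "\<And>y. y \<in> Net \<Longrightarrow>
      (1 - t / 2) * \<sigma> \<le> (mat_vec_norm N n A y)\<^sup>2 \<and> (mat_vec_norm N n A y)\<^sup>2 \<le> (1 + t) * \<sigma>"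
  shows "(1 - t) * sqrt \<sigma> \<le> s_min N n A \<and> s_min N n A \<le> s_max N n A \<and> s_max N n A \<le> (1 + t) * sqrt \<sigma>"
proof -
  define P Q where "P = (s_max N n A)\<^sup>2" and "Q = (s_min N n A)\<^sup>2"
  have "P - (1 + t) * \<sigma> \<le> (P - Q) * (1 / 4)\<^sup>2"
    unfolding P_def Q_def using assms net by (intro s_max_sq_le_of_net) auto
  moreover have "(1 - t / 2) * \<sigma> - Q \<le> (P - Q) * (1 / 4)\<^sup>2"
    unfolding P_def Q_def using assms net by (intro s_min_sq_ge_of_net) auto
  \<comment> \<open>eliminating \<open>P - Q\<close> leaves \<open>224 P \<le> (224 + 248 t) \<sigma>\<close> and \<open>(224 - 136 t) \<sigma> \<le> 224 Q\<close>\<close>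
  ultimately have "16 * P - 16 * \<sigma> - 16 * (t * \<sigma>) \<le> P - Q"
    and "16 * \<sigma> - 8 * (t * \<sigma>) - 16 * Q \<le> P - Q"
    by (simp_all add: power2_eq_square algebra_simps)
  moreover have "0 \<le> t * \<sigma>" "0 \<le> t\<^sup>2 * \<sigma>" "t\<^sup>2 * \<sigma> \<le> t * \<sigma>"
    using assms by (simp_all add: power2_eq_square mult_right_mono)
  moreover have "((1 + t) * sqrt \<sigma>)\<^sup>2 = \<sigma> + 2 * (t * \<sigma>) + t\<^sup>2 * \<sigma>"
    and "((1 - t) * sqrt \<sigma>)\<^sup>2 = \<sigma> - 2 * (t * \<sigma>) + t\<^sup>2 * \<sigma>"
    using assms by (simp_all add: power_mult_distrib power2_eq_square algebra_simps)
  ultimately have "P \<le> ((1 + t) * sqrt \<sigma>)\<^sup>2" "((1 - t) * sqrt \<sigma>)\<^sup>2 \<le> Q"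
    by linarith+
  then show ?thesis
    unfolding P_def Q_def using assms s_min_nonneg[OF \<open>1 \<le> n\<close>, of N A] s_min_le_s_max[OF \<open>1 \<le> n\<close>]
    by (auto intro: power2_le_imp_le)
qed

section \<open>Nets of the unit sphere\<close>

abbreviation lborel_fun :: "nat \<Rightarrow> (nat \<Rightarrow> real) measure" where
  "lborel_fun n \<equiv> PiM {..<n} (\<lambda>_. lborel)"

interpretation lborel_product: product_sigma_finite "\<lambda>_::nat. lborel :: real measure"
  by (simp add: product_sigma_finite_def sigma_finite_lborel)

lemma emeasure_lborel_affine:
  fixes c s :: real
  assumes "c \<noteq> 0" "A \<in> sets lborel"
  shows "emeasure lborel A = ennreal \<bar>c\<bar> * emeasure lborel {x. s + c * x \<in> A}"
proof -
  have "emeasure lborel A = emeasure (density (distr lborel borel (\<lambda>x. s + c * x)) (\<lambda>_. ennreal \<bar>c\<bar>)) A"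
    using lborel_real_affine[OF assms(1), of s] by simp
  also have "\<dots> = ennreal \<bar>c\<bar> * emeasure lborel ((\<lambda>x. s + c * x) -` A \<inter> space lborel)"
    using assms by (simp add: emeasure_density_const emeasure_distr)
  finally show ?thesis by (simp add: vimage_def)
qed

lemma emeasure_lborel_fun_affine:
  fixes c :: real and s :: "nat \<Rightarrow> real"
  assumes c: "c \<noteq> 0" and X: "X \<in> sets (lborel_fun n)"
  shows "emeasure (lborel_fun n) X = ennreal (\<bar>c\<bar> ^ n) *
    emeasure (lborel_fun n) ((\<lambda>z. \<lambda>i\<in>{..<n}. s i + c * z i) -` X \<inter> space (lborel_fun n))"
proof -
  define T where "T = (\<lambda>z::nat \<Rightarrow> real. \<lambda>i\<in>{..<n}. s i + c * z i)"
  have T: "T \<in> measurable (lborel_fun n) (lborel_fun n)" unfolding T_def by measurable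
  have "density (distr (lborel_fun n) (lborel_fun n) T) (\<lambda>_. ennreal (\<bar>c\<bar> ^ n)) = lborel_fun n"
  proof (rule lborel_product.PiM_eqI)
    fix A :: "nat \<Rightarrow> real set" assume A: "\<And>i. i \<in> {..<n} \<Longrightarrow> A i \<in> sets lborel"
    then have pre_sets: "{x. s i + c * x \<in> A i} \<in> sets lborel" if "i < n" for i
      using measurable_sets[of "\<lambda>x. s i + c * x" lborel borel "A i"] A[of i] that
      by (simp add: vimage_def)
    have "T -` Pi\<^sub>E {..<n} A \<inter> space (lborel_fun n) = Pi\<^sub>E {..<n} (\<lambda>i. {x. s i + c * x \<in> A i})"
      by (auto simp: T_def space_PiM PiE_def Pi_def extensional_def)
    moreover have "Pi\<^sub>E {..<n} A \<in> sets (lborel_fun n)"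
      using A by (intro sets_PiM_I_finite) auto
    ultimately have "emeasure (density (distr (lborel_fun n) (lborel_fun n) T) (\<lambda>_. ennreal (\<bar>c\<bar> ^ n))) (Pi\<^sub>E {..<n} A)
        = ennreal (\<bar>c\<bar> ^ n) * emeasure (lborel_fun n) (Pi\<^sub>E {..<n} (\<lambda>i. {x. s i + c * x \<in> A i}))"
      using T by (simp add: emeasure_density_const emeasure_distr)
    also have "\<dots> = ennreal (\<bar>c\<bar> ^ n) * (\<Prod>i<n. emeasure lborel {x. s i + c * x \<in> A i})"
      using pre_sets by (subst lborel_product.emeasure_PiM) auto
    also have "\<dots> = (\<Prod>i<n. ennreal \<bar>c\<bar> * emeasure lborel {x. s i + c * x \<in> A i})"
      by (simp add: prod.distrib ennreal_power)
    also have "\<dots> = (\<Prod>i<n. emeasure lborel (A i))"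
      using A c by (intro prod.cong refl) (simp add: emeasure_lborel_affine[symmetric])
    finally show "emeasure (density (distr (lborel_fun n) (lborel_fun n) T) (\<lambda>_. ennreal (\<bar>c\<bar> ^ n))) (Pi\<^sub>E {..<n} A)
        = (\<Prod>i\<in>{..<n}. emeasure lborel (A i))" by simp
  qed simp_all
  then have "emeasure (lborel_fun n) X
      = emeasure (density (distr (lborel_fun n) (lborel_fun n) T) (\<lambda>_. ennreal (\<bar>c\<bar> ^ n))) X"
    by simp
  also have "\<dots> = ennreal (\<bar>c\<bar> ^ n) * emeasure (lborel_fun n) (T -` X \<inter> space (lborel_fun n))"
    using X T by (simp add: emeasure_density_const emeasure_distr)
  finally show ?thesis by (simp add: T_def)
qed

definition fun_ball :: "nat \<Rightarrow> (nat \<Rightarrow> real) \<Rightarrow> real \<Rightarrow> (nat \<Rightarrow> real) set" where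
  "fun_ball n c r = {z \<in> space (lborel_fun n). l2_norm n (\<lambda>i. z i - c i) < r}"

lemma fun_ball_sets [measurable]: "fun_ball n c r \<in> sets (lborel_fun n)"
  unfolding fun_ball_def l2_norm_def by measurable

lemma emeasure_fun_ball_translate:
  "emeasure (lborel_fun n) (fun_ball n c r) = emeasure (lborel_fun n) (fun_ball n (\<lambda>_. 0) r)"
proof -
  have "(\<lambda>z. \<lambda>i\<in>{..<n}. c i + 1 * z i) -` fun_ball n c r \<inter> space (lborel_fun n) = fun_ball n (\<lambda>_. 0) r"
    by (auto simp: fun_ball_def space_PiM PiE_def Pi_def extensional_def l2_norm_def)
  then show ?thesis
    using emeasure_lborel_fun_affine[of 1 "fun_ball n c r" n c] by simp
qed

lemma emeasure_fun_ball_scale: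
  assumes "k > 0"
  shows "emeasure (lborel_fun n) (fun_ball n (\<lambda>_. 0) (k * r))
    = ennreal (k ^ n) * emeasure (lborel_fun n) (fun_ball n (\<lambda>_. 0) r)"
proof -
  have "(\<lambda>z. \<lambda>i\<in>{..<n}. 0 + k * z i) -` fun_ball n (\<lambda>_. 0) (k * r) \<inter> space (lborel_fun n)
      = fun_ball n (\<lambda>_. 0) r"
  proof -
    have "l2_norm n (\<lambda>i\<in>{..<n}. k * z i) = l2_norm n (\<lambda>i. k * z i)" for z
      by (simp add: l2_norm_def)
    then show ?thesis
      using assms unfolding fun_ball_def by (auto simp: space_PiM PiE_iff extensional_def l2_norm_scale)
  qed
  then show ?thesis
    using emeasure_lborel_fun_affine[of k "fun_ball n (\<lambda>_. 0) (k * r)" n "\<lambda>_. 0"] assms by simp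
qed

lemma emeasure_fun_ball_finite: "emeasure (lborel_fun n) (fun_ball n (\<lambda>_. 0) r) < \<infinity>"
proof -
  have "fun_ball n (\<lambda>_. 0) r \<subseteq> Pi\<^sub>E {..<n} (\<lambda>_. {-\<bar>r\<bar>..\<bar>r\<bar>})"
  proof
    fix z assume z: "z \<in> fun_ball n (\<lambda>_. 0) r"
    then have "l2_norm n z < r" by (simp add: fun_ball_def)
    then have "z i \<in> {-\<bar>r\<bar>..\<bar>r\<bar>}" if "i < n" for i
      using abs_le_l2_norm[OF that, of z] abs_ge_self[of r] abs_ge_self[of "z i"] abs_ge_minus_self[of "z i"]
      by simp
    with z show "z \<in> Pi\<^sub>E {..<n} (\<lambda>_. {-\<bar>r\<bar>..\<bar>r\<bar>})"
      by (auto simp: fun_ball_def space_PiM PiE_iff)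
  qed
  then have "emeasure (lborel_fun n) (fun_ball n (\<lambda>_. 0) r)
      \<le> emeasure (lborel_fun n) (Pi\<^sub>E {..<n} (\<lambda>_. {-\<bar>r\<bar>..\<bar>r\<bar>}))"
    by (intro emeasure_mono) auto
  also have "\<dots> = (\<Prod>i<n. emeasure lborel {-\<bar>r\<bar>..\<bar>r\<bar>})"
    by (subst lborel_product.emeasure_PiM) auto
  also have "\<dots> < \<infinity>"
    by (simp add: power_less_top_ennreal)
  finally show ?thesis .
qed

lemma emeasure_fun_ball_pos:
  assumes "r > 0"
  shows "emeasure (lborel_fun n) (fun_ball n (\<lambda>_. 0) r) > 0"
proof -
  define \<delta> where "\<delta> = r / (real n + 1)"
  have "\<delta> > 0" using assms by (simp add: \<delta>_def)
  have "Pi\<^sub>E {..<n} (\<lambda>_. {-\<delta><..<\<delta>}) \<subseteq> fun_ball n (\<lambda>_. 0) r"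
  proof
    fix z assume z: "z \<in> Pi\<^sub>E {..<n} (\<lambda>_. {-\<delta><..<\<delta>})"
    have "l2_norm n z \<le> (\<Sum>i<n. \<bar>z i\<bar>)"
      unfolding l2_norm_eq_L2_set by (rule L2_set_le_sum_abs)
    also have "\<dots> \<le> (\<Sum>i<n. \<delta>)"
      using z by (intro sum_mono) (auto simp: PiE_def Pi_def abs_less_iff less_imp_le)
    also have "\<dots> < r"
      using assms by (simp add: \<delta>_def field_simps)
    finally show "z \<in> fun_ball n (\<lambda>_. 0) r"
      using z by (simp add: fun_ball_def space_PiM PiE_iff)
  qed
  then have "emeasure (lborel_fun n) (Pi\<^sub>E {..<n} (\<lambda>_. {-\<delta><..<\<delta>}))
      \<le> emeasure (lborel_fun n) (fun_ball n (\<lambda>_. 0) r)"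
    by (intro emeasure_mono) auto
  moreover have "emeasure (lborel_fun n) (Pi\<^sub>E {..<n} (\<lambda>_. {-\<delta><..<\<delta>})) = ennreal ((2 * \<delta>) ^ n)"
    using \<open>\<delta> > 0\<close> by (subst lborel_product.emeasure_PiM) (auto simp: ennreal_power)
  moreover have "ennreal ((2 * \<delta>) ^ n) > 0" using \<open>\<delta> > 0\<close> by simp
  ultimately show ?thesis by (metis order_less_le_trans)
qed

definition separated :: "nat \<Rightarrow> real \<Rightarrow> (nat \<Rightarrow> real) set \<Rightarrow> bool" where
  "separated n \<epsilon> F \<longleftrightarrow> (\<forall>y\<in>F. \<forall>y'\<in>F. y \<noteq> y' \<longrightarrow> \<epsilon> < l2_norm n (\<lambda>j. y j - y' j))"

lemma disjoint_family_fun_ball_separated: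
  assumes "separated n \<epsilon> F"
  shows "disjoint_family_on (\<lambda>y. fun_ball n y (\<epsilon> / 2)) F"
  unfolding disjoint_family_on_def
proof (intro ballI impI, rule ccontr)
  fix y y' assume "y \<in> F" "y' \<in> F" "y \<noteq> y'" "fun_ball n y (\<epsilon> / 2) \<inter> fun_ball n y' (\<epsilon> / 2) \<noteq> {}"
  then obtain z where "l2_norm n (\<lambda>j. z j - y j) < \<epsilon> / 2" "l2_norm n (\<lambda>j. z j - y' j) < \<epsilon> / 2"
    by (auto simp: fun_ball_def)
  then have "l2_norm n (\<lambda>j. (y j - z j) + (z j - y' j)) < \<epsilon>"
    using l2_norm_add_le[of n "\<lambda>j. y j - z j" "\<lambda>j. z j - y' j"] l2_norm_minus_commute[of n y z]
    by simp
  moreover have "\<epsilon> < l2_norm n (\<lambda>j. y j - y' j)"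
    using assms \<open>y \<in> F\<close> \<open>y' \<in> F\<close> \<open>y \<noteq> y'\<close> by (simp add: separated_def)
  ultimately show False by simp
qed

lemma fun_ball_unit_vecs_subset:
  assumes "y \<in> unit_vecs n"
  shows "fun_ball n y r \<subseteq> fun_ball n (\<lambda>_. 0) (1 + r)"
proof
  fix z assume "z \<in> fun_ball n y r"
  moreover have "l2_norm n (\<lambda>j. (z j - y j) + y j) \<le> l2_norm n (\<lambda>j. z j - y j) + l2_norm n y"
    by (rule l2_norm_add_le)
  ultimately show "z \<in> fun_ball n (\<lambda>_. 0) (1 + r)"
    using assms by (auto simp: fun_ball_def l2_norm_unit_vecs)
qed

lemma card_separated_unit_vecs_le:
  assumes "\<epsilon> > 0" "finite F" "F \<subseteq> unit_vecs n" "separated n \<epsilon> F"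
  shows "real (card F) \<le> (1 + 2 / \<epsilon>) ^ n"
proof -
  define r where "r = \<epsilon> / 2"
  have "r > 0" using assms by (simp add: r_def)
  define m where "m = emeasure (lborel_fun n) (fun_ball n (\<lambda>_. 0) r)"
  have "emeasure (lborel_fun n) (fun_ball n y r) = m" for y
    unfolding m_def by (rule emeasure_fun_ball_translate)
  then have "of_nat (card F) * m = (\<Sum>y\<in>F. emeasure (lborel_fun n) (fun_ball n y r))"
    by simp
  also have "\<dots> = emeasure (lborel_fun n) (\<Union>y\<in>F. fun_ball n y r)"
    using disjoint_family_fun_ball_separated[OF assms(4)] \<open>finite F\<close>
    by (intro sum_emeasure) (auto simp: r_def)
  also have "\<dots> \<le> emeasure (lborel_fun n) (fun_ball n (\<lambda>_. 0) ((1 + r) / r * r))"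
    using fun_ball_unit_vecs_subset assms(3) \<open>r > 0\<close> by (intro emeasure_mono) auto
  also have "\<dots> = ennreal (((1 + r) / r) ^ n) * m"
    unfolding m_def using \<open>r > 0\<close> by (intro emeasure_fun_ball_scale) simp
  finally have "of_nat (card F) * m \<le> ennreal (((1 + r) / r) ^ n) * m" .
  moreover obtain m' where "m = ennreal m'" "m' > 0"
    using emeasure_fun_ball_pos[OF \<open>r > 0\<close>, of n] emeasure_fun_ball_finite[of n r]
    by (cases m) (auto simp: m_def)
  ultimately have "real (card F) * m' \<le> ((1 + r) / r) ^ n * m'"
    using \<open>r > 0\<close> by (simp add: ennreal_of_nat_eq_real_of_nat ennreal_mult'[symmetric])
  then have "real (card F) \<le> ((1 + r) / r) ^ n" using \<open>m' > 0\<close> by simp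
  moreover have "(1 + r) / r = 1 + 2 / \<epsilon>" using assms(1) by (simp add: r_def field_simps)
  ultimately show ?thesis by simp
qed

lemma unit_net_exists:
  assumes "\<epsilon> > 0"
  shows "\<exists>F. finite F \<and> F \<subseteq> unit_vecs n \<and> real (card F) \<le> (1 + 2 / \<epsilon>) ^ n \<and>
    (\<forall>x\<in>unit_vecs n. \<exists>y\<in>F. l2_norm n (\<lambda>j. y j - x j) \<le> \<epsilon>)"
proof -
  define S where "S = {F. finite F \<and> F \<subseteq> unit_vecs n \<and> separated n \<epsilon> F}"
  have card_S: "real (card F) \<le> (1 + 2 / \<epsilon>) ^ n" if "F \<in> S" for F
    using that assms by (intro card_separated_unit_vecs_le) (auto simp: S_def)
  have "finite (card ` S)"
    by (rule finite_subset[of _ "{..nat \<lfloor>(1 + 2 / \<epsilon>) ^ n\<rfloor>}"]) (auto simp: le_nat_floor card_S)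
  moreover have "{} \<in> S" by (simp add: S_def separated_def)
  ultimately obtain F where "F \<in> S" and F_max: "card F = Max (card ` S)"
    using Max_in[of "card ` S"] by fastforce
  have "\<exists>y\<in>F. l2_norm n (\<lambda>j. y j - x j) \<le> \<epsilon>" if "x \<in> unit_vecs n" for x
  proof (rule ccontr)
    assume "\<not> ?thesis"
    then have far: "\<epsilon> < l2_norm n (\<lambda>j. y j - x j)" if "y \<in> F" for y
      using that by force
    then have "x \<notin> F" using assms by (force simp: l2_norm_def)
    have "insert x F \<in> S"
      using \<open>F \<in> S\<close> \<open>x \<in> unit_vecs n\<close> far l2_norm_minus_commute[of n x]
      by (auto simp: S_def separated_def)
    then have "card (insert x F) \<le> card F"
      using F_max \<open>finite (card ` S)\<close> by simp
    then show False using \<open>x \<notin> F\<close> \<open>F \<in> S\<close> by (simp add: S_def)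
  qed
  then show ?thesis using \<open>F \<in> S\<close> card_S by (auto simp: S_def)
qed

definition unit_net :: "nat \<Rightarrow> real \<Rightarrow> (nat \<Rightarrow> real) set" where
  "unit_net n \<epsilon> = (SOME F. finite F \<and> F \<subseteq> unit_vecs n \<and> real (card F) \<le> (1 + 2 / \<epsilon>) ^ n \<and>
    (\<forall>x\<in>unit_vecs n. \<exists>y\<in>F. l2_norm n (\<lambda>j. y j - x j) \<le> \<epsilon>))"

lemma unit_net_properties:
  assumes "\<epsilon> > 0"
  shows finite_unit_net: "finite (unit_net n \<epsilon>)"
    and unit_net_subset: "unit_net n \<epsilon> \<subseteq> unit_vecs n"
    and card_unit_net_le: "real (card (unit_net n \<epsilon>)) \<le> (1 + 2 / \<epsilon>) ^ n"
    and unit_net_covers: "x \<in> unit_vecs n \<Longrightarrow> \<exists>y\<in>unit_net n \<epsilon>. l2_norm n (\<lambda>j. y j - x j) \<le> \<epsilon>"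
  using someI_ex[OF unit_net_exists[OF assms, of n]] unfolding unit_net_def[symmetric] by blast+

lemma unit_net_Suc_subset: "unit_net n (1 / Suc k) \<subseteq> unit_vecs n"
  by (simp add: unit_net_subset)

lemma abs_mat_vec_norm_diff_le:
  "\<bar>mat_vec_norm N n A x - mat_vec_norm N n A y\<bar> \<le> mat_vec_norm N n A (\<lambda>j. x j - y j)"
proof -
  have "mat_vec_norm N n A x \<le> mat_vec_norm N n A y + mat_vec_norm N n A (\<lambda>j. x j - y j)"
    using mat_vec_norm_add_le[of N n A y "\<lambda>j. x j - y j"] by simp
  moreover have "mat_vec_norm N n A y \<le> mat_vec_norm N n A x + mat_vec_norm N n A (\<lambda>j. x j - y j)"
    using mat_vec_norm_add_le[of N n A x "\<lambda>j. - 1 * (x j - y j)"]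
      mat_vec_norm_scale[of N n A "- 1" "\<lambda>j. x j - y j"]
    by simp
  ultimately show ?thesis by linarith
qed

lemma mat_vec_norm_approx_unit_nets:
  assumes "x \<in> unit_vecs n" "\<delta> > 0"
  shows "\<exists>k. \<exists>z\<in>unit_net n (1 / Suc k). \<bar>mat_vec_norm N n A z - mat_vec_norm N n A x\<bar> \<le> \<delta>"
proof -
  obtain k :: nat where k: "frobenius_norm N n A / \<delta> < k"
    using reals_Archimedean2 by blast
  obtain z where "z \<in> unit_net n (1 / Suc k)" and z: "l2_norm n (\<lambda>j. z j - x j) \<le> 1 / Suc k"
    using unit_net_covers[OF _ assms(1), of "1 / Suc k"] by auto
  have "\<bar>mat_vec_norm N n A z - mat_vec_norm N n A x\<bar> \<le> mat_vec_norm N n A (\<lambda>j. z j - x j)"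
    by (rule abs_mat_vec_norm_diff_le)
  also have "\<dots> \<le> frobenius_norm N n A * (1 / Suc k)"
    using z by (intro order_trans[OF mat_vec_norm_le_frobenius] mult_left_mono)
      (auto simp: frobenius_norm_def sum_nonneg)
  also have "\<dots> \<le> \<delta>"
    using k assms(2) by (simp add: field_simps)
  finally show ?thesis using \<open>z \<in> unit_net n (1 / Suc k)\<close> by blast
qed

text \<open>The nets of mesh \<open>1 / Suc k\<close> together are a countable dense set of unit vectors; testing
  on them is what makes events about \<open>s_min\<close> and \<open>s_max\<close> measurable.\<close>

lemma s_min_ge_iff_unit_nets:
  assumes "1 \<le> n"
  shows "c \<le> s_min N n A \<longleftrightarrow> (\<forall>k. \<forall>z\<in>unit_net n (1 / Suc k). c \<le> mat_vec_norm N n A z)"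
proof
  assume "c \<le> s_min N n A"
  then show "\<forall>k. \<forall>z\<in>unit_net n (1 / Suc k). c \<le> mat_vec_norm N n A z"
    using s_min_le unit_net_Suc_subset order_trans by blast
next
  assume nets: "\<forall>k. \<forall>z\<in>unit_net n (1 / Suc k). c \<le> mat_vec_norm N n A z"
  have "c \<le> mat_vec_norm N n A x" if "x \<in> unit_vecs n" for x
  proof (rule field_le_epsilon)
    fix \<delta> :: real assume "\<delta> > 0"
    then show "c \<le> mat_vec_norm N n A x + \<delta>"
      using mat_vec_norm_approx_unit_nets[OF that \<open>\<delta> > 0\<close>, of N A] nets by fastforce
  qed
  then show "c \<le> s_min N n A"
    unfolding s_min_def by (intro cINF_greatest unit_vecs_nonempty[OF assms])
qed

lemma s_max_le_iff_unit_nets: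
  assumes "1 \<le> n"
  shows "s_max N n A \<le> c \<longleftrightarrow> (\<forall>k. \<forall>z\<in>unit_net n (1 / Suc k). mat_vec_norm N n A z \<le> c)"
proof
  assume "s_max N n A \<le> c"
  then show "\<forall>k. \<forall>z\<in>unit_net n (1 / Suc k). mat_vec_norm N n A z \<le> c"
    using s_max_ge unit_net_Suc_subset order_trans by blast
next
  assume nets: "\<forall>k. \<forall>z\<in>unit_net n (1 / Suc k). mat_vec_norm N n A z \<le> c"
  have "mat_vec_norm N n A x \<le> c" if "x \<in> unit_vecs n" for x
  proof (rule field_le_epsilon)
    fix \<delta> :: real assume "\<delta> > 0"
    then show "mat_vec_norm N n A x \<le> c + \<delta>"
      using mat_vec_norm_approx_unit_nets[OF that \<open>\<delta> > 0\<close>, of N A] nets by fastforce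
  qed
  then show "s_max N n A \<le> c"
    unfolding s_max_def by (intro cSUP_least unit_vecs_nonempty[OF assms])
qed

lemma borel_measurable_mat_vec_norm:
  assumes "\<And>i j. i < N \<Longrightarrow> j < n \<Longrightarrow> (\<lambda>\<omega>. A \<omega> i j) \<in> borel_measurable M"
  shows "(\<lambda>\<omega>. mat_vec_norm N n (A \<omega>) x) \<in> borel_measurable M"
  unfolding mat_vec_norm_def using assms by (auto intro!: borel_measurable_sum)

lemma singular_value_bounds_measurable:
  assumes "1 \<le> n" and "\<And>i j. i < N \<Longrightarrow> j < n \<Longrightarrow> (\<lambda>\<omega>. A \<omega> i j) \<in> borel_measurable M"
  shows "{\<omega> \<in> space M. a \<le> s_min N n (A \<omega>) \<and> s_min N n (A \<omega>) \<le> s_max N n (A \<omega>)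
    \<and> s_max N n (A \<omega>) \<le> b} \<in> sets M"
proof -
  have [measurable]: "(\<lambda>\<omega>. mat_vec_norm N n (A \<omega>) z) \<in> borel_measurable M" for z
    by (rule borel_measurable_mat_vec_norm[OF assms(2)])
  have [measurable]: "Measurable.pred M (\<lambda>\<omega>. \<forall>k. \<forall>z\<in>unit_net n (1 / Suc k). P (mat_vec_norm N n (A \<omega>) z))"
    if [measurable]: "Measurable.pred borel P" for P :: "real \<Rightarrow> bool"
    by (intro pred_intros_countable pred_intros_finite finite_unit_net) measurable
  have "{\<omega> \<in> space M. a \<le> s_min N n (A \<omega>) \<and> s_max N n (A \<omega>) \<le> b} \<in> sets M"
    unfolding s_min_ge_iff_unit_nets[OF assms(1)] s_max_le_iff_unit_nets[OF assms(1)] by measurable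
  then show ?thesis
    using s_min_le_s_max[OF assms(1)] by (simp add: conj_commute)
qed

section \<open>Chernoff bounds for weighted chi-square sums\<close>

lemma ln_one_minus_ge:
  fixes w :: real
  assumes "0 \<le> w" "w < 1"
  shows "- w - w\<^sup>2 / (2 * (1 - w)) \<le> ln (1 - w)"
proof -
  define f where "f x = x / 2 + 1 / (2 * (1 - x)) + ln (1 - x)" for x :: real
  have "f 0 \<le> f w"
  proof (rule DERIV_nonneg_imp_nondecreasing[OF assms(1)])
    fix x :: real assume "0 \<le> x" "x \<le> w"
    then have "x < 1" using assms by simp
    have "(f has_real_derivative x\<^sup>2 / (2 * (1 - x)\<^sup>2)) (at x)"
      unfolding f_def using \<open>x < 1\<close>
      by (auto intro!: derivative_eq_intros)
        (simp add: divide_simps power2_eq_square, simp add: algebra_simps)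
    then show "\<exists>y. (f has_real_derivative y) (at x) \<and> 0 \<le> y" by auto
  qed
  moreover have "w\<^sup>2 / (2 * (1 - w)) = w / 2 + 1 / (2 * (1 - w)) - 1 / 2 - w"
    using assms by (simp add: field_simps power2_eq_square)
  ultimately show ?thesis by (simp add: f_def)
qed

lemma ln_one_plus_ge:
  fixes v :: real
  assumes "0 \<le> v"
  shows "v - v\<^sup>2 / 2 \<le> ln (1 + v)"
proof -
  define f where "f x = ln (1 + x) - x + x\<^sup>2 / 2" for x :: real
  have "f 0 \<le> f v"
  proof (rule DERIV_nonneg_imp_nondecreasing[OF assms])
    fix x :: real assume "0 \<le> x" "x \<le> v"
    then have "(f has_real_derivative x\<^sup>2 / (1 + x)) (at x)"
      unfolding f_def
      by (auto intro!: derivative_eq_intros)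
        (simp add: divide_simps power2_eq_square, simp add: algebra_simps)
    then show "\<exists>y. (f has_real_derivative y) (at x) \<and> 0 \<le> y"
      using \<open>0 \<le> x\<close> by auto
  qed
  then show ?thesis by (simp add: f_def)
qed

lemma exp_div_sqrt_eq:
  fixes \<theta> :: real
  assumes "\<theta> < 1 / 2"
  shows "exp (- \<theta>) / sqrt (1 - 2 * \<theta>) = exp (- \<theta> - ln (1 - 2 * \<theta>) / 2)"
  using assms by (simp add: exp_diff powr_half_sqrt[symmetric] powr_def)

lemma centered_chi_square_mgf_le_nonneg:
  fixes \<theta> :: real
  assumes "0 \<le> \<theta>" "\<theta> < 1 / 2"
  shows "exp (- \<theta>) / sqrt (1 - 2 * \<theta>) \<le> exp (\<theta>\<^sup>2 / (1 - 2 * \<theta>))"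
proof -
  have "- (2 * \<theta>) - (2 * \<theta>)\<^sup>2 / (2 * (1 - 2 * \<theta>)) \<le> ln (1 - 2 * \<theta>)"
    using assms by (intro ln_one_minus_ge) auto
  then have "- \<theta> - ln (1 - 2 * \<theta>) / 2 \<le> \<theta>\<^sup>2 / (1 - 2 * \<theta>)"
    using assms by (simp add: power2_eq_square field_simps)
  then show ?thesis using assms(2) by (simp add: exp_div_sqrt_eq)
qed

lemma centered_chi_square_mgf_le_nonpos:
  fixes \<theta> :: real
  assumes "\<theta> \<le> 0"
  shows "exp (- \<theta>) / sqrt (1 - 2 * \<theta>) \<le> exp (\<theta>\<^sup>2)"
proof -
  have "- 2 * \<theta> - (- 2 * \<theta>)\<^sup>2 / 2 \<le> ln (1 + - 2 * \<theta>)"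
    using assms by (intro ln_one_plus_ge) auto
  then have "- \<theta> - ln (1 - 2 * \<theta>) / 2 \<le> \<theta>\<^sup>2"
    by (simp add: power2_eq_square field_simps)
  then show ?thesis using assms by (simp add: exp_div_sqrt_eq)
qed

lemma std_normal_density_mult_exp:
  fixes \<theta> x :: real
  assumes "\<theta> < 1 / 2"
  shows "std_normal_density x * exp (\<theta> * (x\<^sup>2 - 1)) =
    exp (- \<theta>) / sqrt (1 - 2 * \<theta>) * normal_density 0 (1 / sqrt (1 - 2 * \<theta>)) x"
proof -
  define c where "c = 1 - 2 * \<theta>"
  have "c > 0" using assms by (simp add: c_def)
  have "normal_density 0 (1 / sqrt c) x = sqrt c / sqrt (2 * pi) * exp (- x\<^sup>2 * c / 2)"
    using \<open>c > 0\<close> by (simp add: normal_density_def power_divide real_sqrt_divide field_simps)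
  moreover have "exp (- \<theta>) * exp (- x\<^sup>2 * c / 2) = exp (- x\<^sup>2 / 2) * exp (\<theta> * (x\<^sup>2 - 1))"
    by (simp add: exp_add[symmetric] c_def algebra_simps add_divide_distrib[symmetric])
  ultimately show ?thesis
    using \<open>c > 0\<close> unfolding c_def[symmetric] std_normal_density_def by (simp add: field_simps)
qed

lemma sum_sq_div_one_minus_le:
  fixes a :: "'i \<Rightarrow> real"
  assumes a: "\<And>i. i \<in> I \<Longrightarrow> 0 \<le> a i \<and> a i \<le> c" and "0 \<le> s" "2 * s * c < 1"
  shows "(\<Sum>i\<in>I. (s * a i)\<^sup>2 / (1 - 2 * (s * a i))) \<le> s\<^sup>2 * (\<Sum>i\<in>I. (a i)\<^sup>2) / (1 - 2 * s * c)"
proof -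
  have "(\<Sum>i\<in>I. (s * a i)\<^sup>2 / (1 - 2 * (s * a i))) \<le> (\<Sum>i\<in>I. (s * a i)\<^sup>2 / (1 - 2 * s * c))"
  proof (rule sum_mono)
    fix i assume "i \<in> I"
    then have "s * a i \<le> s * c" using a \<open>0 \<le> s\<close> by (simp add: mult_left_mono)
    then show "(s * a i)\<^sup>2 / (1 - 2 * (s * a i)) \<le> (s * a i)\<^sup>2 / (1 - 2 * s * c)"
      using \<open>2 * s * c < 1\<close> by (intro divide_left_mono) auto
  qed
  then show ?thesis
    by (simp add: power_mult_distrib sum_distrib_left sum_divide_distrib)
qed

lemma chernoff_parameter_upper_tail:
  fixes a :: "'i \<Rightarrow> real"
  assumes a: "\<And>i. i \<in> I \<Longrightarrow> 0 \<le> a i \<and> a i \<le> c"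
    and "c > 0" "(\<Sum>i\<in>I. (a i)\<^sup>2) > 0" "x > 0"
  shows "\<exists>s>0. 2 * s * c < 1 \<and>
    (\<Sum>i\<in>I. (s * a i)\<^sup>2 / (1 - 2 * (s * a i)))
      - s * (2 * sqrt ((\<Sum>i\<in>I. (a i)\<^sup>2) * x) + 2 * c * x) \<le> - x"
proof -
  define A2 where "A2 = (\<Sum>i\<in>I. (a i)\<^sup>2)"
  \<comment> \<open>the Chernoff parameter chosen by Laurent and Massart\<close>
  define w where "w = sqrt (x / A2)"
  define s where "s = w / (1 + 2 * c * w)"
  have "A2 > 0" "w > 0" using assms by (simp_all add: A2_def w_def)
  then have d: "1 + 2 * c * w > 0" using \<open>c > 0\<close> by (simp add: add_pos_pos)
  then have "s > 0" using \<open>w > 0\<close> by (simp add: s_def)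
  have one_minus: "1 - 2 * s * c = 1 / (1 + 2 * c * w)"
    using d by (simp add: s_def field_simps)
  moreover have "1 / (1 + 2 * c * w) > 0" using d by simp
  ultimately have "2 * s * c < 1" by linarith
  have wA: "A2 * w\<^sup>2 = x" using \<open>x > 0\<close> \<open>A2 > 0\<close> by (simp add: w_def)
  have "s\<^sup>2 * A2 = x / (1 + 2 * c * w)\<^sup>2"
    unfolding s_def using wA by (simp add: power_divide algebra_simps)
  moreover have "(\<Sum>i\<in>I. (s * a i)\<^sup>2 / (1 - 2 * (s * a i))) \<le> s\<^sup>2 * A2 / (1 - 2 * s * c)"
    unfolding A2_def using a \<open>s > 0\<close> \<open>2 * s * c < 1\<close> by (intro sum_sq_div_one_minus_le) auto
  ultimately have "(\<Sum>i\<in>I. (s * a i)\<^sup>2 / (1 - 2 * (s * a i))) \<le> x / (1 + 2 * c * w)"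
    using d unfolding one_minus by (simp add: power2_eq_square)
  moreover have "sqrt (A2 * x) = A2 * w"
    using wA \<open>A2 > 0\<close> \<open>w > 0\<close> by (simp add: real_sqrt_mult power2_eq_square flip: wA)
  then have "s * (2 * sqrt (A2 * x) + 2 * c * x) = (2 * x + 2 * c * w * x) / (1 + 2 * c * w)"
    using wA by (simp add: s_def field_simps power2_eq_square)
  moreover have "x / (1 + 2 * c * w) - (2 * x + 2 * c * w * x) / (1 + 2 * c * w) = - x"
  proof -
    have "x - (2 * x + 2 * c * w * x) = - x * (1 + 2 * c * w)" by (simp add: algebra_simps)
    then show ?thesis using d by (simp only: diff_divide_distrib[symmetric]) simp
  qed
  ultimately show ?thesis
    using \<open>s > 0\<close> \<open>2 * s * c < 1\<close> unfolding A2_def by (intro exI[of _ s]) auto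
qed

lemma laurent_massart_threshold_le:
  assumes "A2 > 0" "c > 0" "0 \<le> \<sigma>" "t > 0"
    and "x \<le> t\<^sup>2 * \<sigma>\<^sup>2 / (16 * A2)" "x \<le> t * \<sigma> / (4 * c)"
  shows "2 * sqrt (A2 * x) + 2 * c * x \<le> t * \<sigma>"
proof -
  have "A2 * x \<le> (t * \<sigma> / 4)\<^sup>2"
    using assms(1,5) by (simp add: field_simps power2_eq_square)
  then have "2 * sqrt (A2 * x) \<le> t * \<sigma> / 2"
    using assms(3,4) real_sqrt_le_mono[of "A2 * x" "(t * \<sigma> / 4)\<^sup>2"] by simp
  moreover have "2 * c * x \<le> t * \<sigma> / 2"
    using assms(2,6) by (simp add: field_simps)
  ultimately show ?thesis by simp
qed

context prob_space
begin

lemma nn_integral_exp_centered_std_normal_sq: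
  assumes X: "distributed M lborel X std_normal_density" and "\<theta> < 1 / 2"
  shows "(\<integral>\<^sup>+\<omega>. ennreal (exp (\<theta> * ((X \<omega>)\<^sup>2 - 1))) \<partial>M) = ennreal (exp (- \<theta>) / sqrt (1 - 2 * \<theta>))"
proof -
  define s k where "s = 1 / sqrt (1 - 2 * \<theta>)" and "k = exp (- \<theta>) / sqrt (1 - 2 * \<theta>)"
  have "(\<integral>\<^sup>+\<omega>. ennreal (exp (\<theta> * ((X \<omega>)\<^sup>2 - 1))) \<partial>M)
      = (\<integral>\<^sup>+x. ennreal (std_normal_density x) * ennreal (exp (\<theta> * (x\<^sup>2 - 1))) \<partial>lborel)"
    by (rule distributed_nn_integral[OF X, symmetric]) measurable
  also have "\<dots> = (\<integral>\<^sup>+x. ennreal k * ennreal (normal_density 0 s x) \<partial>lborel)"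
    using \<open>\<theta> < 1 / 2\<close>
    by (intro nn_integral_cong) (simp add: ennreal_mult[symmetric] std_normal_density_mult_exp k_def s_def)
  also have "\<dots> = ennreal k * (\<integral>\<^sup>+x. ennreal (normal_density 0 s x) \<partial>lborel)"
    by (rule nn_integral_cmult) measurable
  also have "(\<integral>\<^sup>+x. ennreal (normal_density 0 s x) \<partial>lborel) = 1"
    using \<open>\<theta> < 1 / 2\<close> by (subst nn_integral_eq_integral) (auto simp: s_def)
  finally show ?thesis by (simp add: k_def)
qed

lemma centered_chi_square_chernoff:
  fixes G :: "'i \<Rightarrow> 'a \<Rightarrow> real" and \<theta> b :: "'i \<Rightarrow> real"
  assumes "finite I" and ind: "indep_vars (\<lambda>_. borel) G I"
    and dist: "\<And>i. i \<in> I \<Longrightarrow> distributed M lborel (G i) std_normal_density"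
    and \<theta>: "\<And>i. i \<in> I \<Longrightarrow> \<theta> i < 1 / 2"
    and mgf: "\<And>i. i \<in> I \<Longrightarrow> exp (- \<theta> i) / sqrt (1 - 2 * \<theta> i) \<le> exp (b i)"
  shows "emeasure M {\<omega> \<in> space M. r \<le> (\<Sum>i\<in>I. \<theta> i * ((G i \<omega>)\<^sup>2 - 1))}
    \<le> ennreal (exp ((\<Sum>i\<in>I. b i) - r))"
proof -
  have [measurable]: "G i \<in> borel_measurable M" if "i \<in> I" for i
    using ind that by (auto simp: indep_vars_def)
  define Z where "Z \<omega> = (\<Sum>i\<in>I. \<theta> i * ((G i \<omega>)\<^sup>2 - 1))" for \<omega>
  have "emeasure M {\<omega> \<in> space M. r \<le> Z \<omega>} = (\<integral>\<^sup>+\<omega>. indicator {\<omega> \<in> space M. r \<le> Z \<omega>} \<omega> \<partial>M)"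
    unfolding Z_def by (intro nn_integral_indicator[symmetric]) measurable
  also have "\<dots> \<le> (\<integral>\<^sup>+\<omega>. ennreal (exp (- r)) * (\<Prod>i\<in>I. ennreal (exp (\<theta> i * ((G i \<omega>)\<^sup>2 - 1)))) \<partial>M)"
  proof (rule nn_integral_mono)
    fix \<omega>
    have "exp (Z \<omega> - r) = exp (- r) * (\<Prod>i\<in>I. exp (\<theta> i * ((G i \<omega>)\<^sup>2 - 1)))"
      unfolding Z_def using \<open>finite I\<close> by (simp add: exp_sum exp_diff exp_minus field_simps)
    then show "indicator {\<omega> \<in> space M. r \<le> Z \<omega>} \<omega>
        \<le> ennreal (exp (- r)) * (\<Prod>i\<in>I. ennreal (exp (\<theta> i * ((G i \<omega>)\<^sup>2 - 1))))"
      by (auto simp: indicator_def ennreal_mult'[symmetric] prod_ennreal prod_nonneg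
          simp flip: \<open>exp (Z \<omega> - r) = _\<close>)
  qed
  also have "\<dots> = ennreal (exp (- r)) * (\<Prod>i\<in>I. \<integral>\<^sup>+\<omega>. ennreal (exp (\<theta> i * ((G i \<omega>)\<^sup>2 - 1))) \<partial>M)"
    using \<open>finite I\<close>
    by (subst nn_integral_cmult, measurable, subst indep_vars_nn_integral)
      (auto intro: indep_vars_compose2[OF ind])
  also have "\<dots> = ennreal (exp (- r)) * (\<Prod>i\<in>I. ennreal (exp (- \<theta> i) / sqrt (1 - 2 * \<theta> i)))"
    by (intro arg_cong[where f = "\<lambda>p. ennreal (exp (- r)) * p"] prod.cong refl
        nn_integral_exp_centered_std_normal_sq dist \<theta>)
  also have "\<dots> \<le> ennreal (exp (- r)) * (\<Prod>i\<in>I. ennreal (exp (b i)))"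
    using mgf by (intro mult_left_mono prod_mono_ennreal ennreal_leI) auto
  also have "\<dots> = ennreal (exp ((\<Sum>i\<in>I. b i) - r))"
    using \<open>finite I\<close> by (simp add: prod_ennreal exp_sum exp_diff exp_minus ennreal_mult'[symmetric] field_simps)
  finally show ?thesis by (simp add: Z_def)
qed

lemma weighted_centered_chi_square_upper_tail:
  fixes G :: "'i \<Rightarrow> 'a \<Rightarrow> real" and a :: "'i \<Rightarrow> real"
  assumes "finite I" and ind: "indep_vars (\<lambda>_. borel) G I"
    and dist: "\<And>i. i \<in> I \<Longrightarrow> distributed M lborel (G i) std_normal_density"
    and a: "\<And>i. i \<in> I \<Longrightarrow> 0 \<le> a i \<and> a i \<le> c"
    and "c > 0" "(\<Sum>i\<in>I. (a i)\<^sup>2) > 0" "x > 0"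
  shows "emeasure M {\<omega> \<in> space M. 2 * sqrt ((\<Sum>i\<in>I. (a i)\<^sup>2) * x) + 2 * c * x
      \<le> (\<Sum>i\<in>I. a i * ((G i \<omega>)\<^sup>2 - 1))} \<le> ennreal (exp (- x))"
proof -
  define u where "u = 2 * sqrt ((\<Sum>i\<in>I. (a i)\<^sup>2) * x) + 2 * c * x"
  obtain s where "s > 0" "2 * s * c < 1"
    and exponent: "(\<Sum>i\<in>I. (s * a i)\<^sup>2 / (1 - 2 * (s * a i))) - s * u \<le> - x"
    using chernoff_parameter_upper_tail[OF a \<open>c > 0\<close> assms(6,7)] unfolding u_def by blast
  have \<theta>: "0 \<le> s * a i" "s * a i < 1 / 2" if "i \<in> I" for i
  proof -
    have "s * a i \<le> s * c" using a[OF that] \<open>s > 0\<close> by (intro mult_left_mono) auto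
    then show "s * a i < 1 / 2" using \<open>2 * s * c < 1\<close> by linarith
    show "0 \<le> s * a i" using a[OF that] \<open>s > 0\<close> by simp
  qed
  have "{\<omega> \<in> space M. u \<le> (\<Sum>i\<in>I. a i * ((G i \<omega>)\<^sup>2 - 1))}
      = {\<omega> \<in> space M. s * u \<le> (\<Sum>i\<in>I. s * a i * ((G i \<omega>)\<^sup>2 - 1))}"
    using \<open>s > 0\<close> by (simp add: mult.assoc flip: sum_distrib_left)
  also have "emeasure M \<dots> \<le> ennreal (exp ((\<Sum>i\<in>I. (s * a i)\<^sup>2 / (1 - 2 * (s * a i))) - s * u))"
    using \<theta> by (intro centered_chi_square_chernoff[OF \<open>finite I\<close> ind dist]
        centered_chi_square_mgf_le_nonneg) auto
  also have "\<dots> \<le> ennreal (exp (- x))"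
    using exponent by (intro ennreal_leI) simp
  finally show ?thesis unfolding u_def .
qed

lemma weighted_centered_chi_square_lower_tail:
  fixes G :: "'i \<Rightarrow> 'a \<Rightarrow> real" and a :: "'i \<Rightarrow> real"
  assumes "finite I" and ind: "indep_vars (\<lambda>_. borel) G I"
    and dist: "\<And>i. i \<in> I \<Longrightarrow> distributed M lborel (G i) std_normal_density"
    and a: "\<And>i. i \<in> I \<Longrightarrow> 0 \<le> a i"
    and "(\<Sum>i\<in>I. (a i)\<^sup>2) > 0" "u \<ge> 0"
  shows "emeasure M {\<omega> \<in> space M. (\<Sum>i\<in>I. a i * ((G i \<omega>)\<^sup>2 - 1)) \<le> - u}
    \<le> ennreal (exp (- u\<^sup>2 / (4 * (\<Sum>i\<in>I. (a i)\<^sup>2))))"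
proof -
  define A2 where "A2 = (\<Sum>i\<in>I. (a i)\<^sup>2)"
  \<comment> \<open>minimises the exponent \<open>s\<^sup>2 A2 - s u\<close>\<close>
  define s where "s = u / (2 * A2)"
  have "s \<ge> 0" using assms by (simp add: s_def A2_def)
  have [measurable]: "G i \<in> borel_measurable M" if "i \<in> I" for i
    using ind that by (auto simp: indep_vars_def)
  have "emeasure M {\<omega> \<in> space M. (\<Sum>i\<in>I. a i * ((G i \<omega>)\<^sup>2 - 1)) \<le> - u}
      \<le> emeasure M {\<omega> \<in> space M. s * u \<le> (\<Sum>i\<in>I. - s * a i * ((G i \<omega>)\<^sup>2 - 1))}"
  proof (rule emeasure_mono, safe)
    fix \<omega> assume "(\<Sum>i\<in>I. a i * ((G i \<omega>)\<^sup>2 - 1)) \<le> - u"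
    from mult_left_mono[OF this \<open>s \<ge> 0\<close>]
    show "s * u \<le> (\<Sum>i\<in>I. - s * a i * ((G i \<omega>)\<^sup>2 - 1))"
      by (simp add: sum_distrib_left sum_negf mult.assoc)
  qed measurable
  also have "\<dots> \<le> ennreal (exp ((\<Sum>i\<in>I. (- s * a i)\<^sup>2) - s * u))"
  proof (rule centered_chi_square_chernoff[OF \<open>finite I\<close> ind dist])
    fix i assume "i \<in> I"
    then have "0 \<le> s * a i" using a \<open>s \<ge> 0\<close> by simp
    then show "- s * a i < 1 / 2"
      and "exp (- (- s * a i)) / sqrt (1 - 2 * (- s * a i)) \<le> exp ((- s * a i)\<^sup>2)"
      using centered_chi_square_mgf_le_nonpos[of "- s * a i"] by simp_all
  qed
  also have "(\<Sum>i\<in>I. (- s * a i)\<^sup>2) - s * u = - u\<^sup>2 / (4 * A2)"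
  proof -
    have "(\<Sum>i\<in>I. (- s * a i)\<^sup>2) = s\<^sup>2 * A2"
      by (simp add: A2_def power_mult_distrib sum_distrib_left)
    then show ?thesis using assms(5) by (simp add: s_def A2_def power2_eq_square field_simps)
  qed
  finally show ?thesis by (simp add: A2_def)
qed

lemma prob_disj_le:
  assumes "{\<omega> \<in> space M. P \<omega>} \<in> events" "{\<omega> \<in> space M. Q \<omega>} \<in> events"
  shows "prob {\<omega> \<in> space M. P \<omega> \<or> Q \<omega>} \<le> prob {\<omega> \<in> space M. P \<omega>} + prob {\<omega> \<in> space M. Q \<omega>}"
proof -
  have "{\<omega> \<in> space M. P \<omega> \<or> Q \<omega>} = {\<omega> \<in> space M. P \<omega>} \<union> {\<omega> \<in> space M. Q \<omega>}"
    by auto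
  then show ?thesis using assms by (simp add: measure_subadditive)
qed

lemma weighted_centered_chi_square_deviation:
  fixes G :: "'i \<Rightarrow> 'a \<Rightarrow> real" and a :: "'i \<Rightarrow> real"
  assumes "finite I" and ind: "indep_vars (\<lambda>_. borel) G I"
    and dist: "\<And>i. i \<in> I \<Longrightarrow> distributed M lborel (G i) std_normal_density"
    and a: "\<And>i. i \<in> I \<Longrightarrow> 0 \<le> a i \<and> a i \<le> c"
    and "c > 0" "(\<Sum>i\<in>I. (a i)\<^sup>2) > 0" "t > 0" "x > 0"
    and x_le: "x \<le> t\<^sup>2 * (\<Sum>i\<in>I. a i)\<^sup>2 / (16 * (\<Sum>i\<in>I. (a i)\<^sup>2))" "x \<le> t * (\<Sum>i\<in>I. a i) / (4 * c)"
  shows "prob {\<omega> \<in> space M. (\<Sum>i\<in>I. a i * ((G i \<omega>)\<^sup>2 - 1)) < - (t / 2 * (\<Sum>i\<in>I. a i))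
      \<or> t * (\<Sum>i\<in>I. a i) < (\<Sum>i\<in>I. a i * ((G i \<omega>)\<^sup>2 - 1))} \<le> 2 * exp (- x)"
proof -
  define \<sigma> A2 where "\<sigma> = (\<Sum>i\<in>I. a i)" and "A2 = (\<Sum>i\<in>I. (a i)\<^sup>2)"
  define Z where "Z \<omega> = (\<Sum>i\<in>I. a i * ((G i \<omega>)\<^sup>2 - 1))" for \<omega>
  have [measurable]: "Z \<in> borel_measurable M"
    using ind unfolding Z_def indep_vars_def by (auto intro!: borel_measurable_sum)
  have "\<sigma> \<ge> 0" "A2 > 0" using a assms(6) by (auto simp: \<sigma>_def A2_def intro: sum_nonneg)
  have "2 * sqrt (A2 * x) + 2 * c * x \<le> t * \<sigma>"
    using x_le \<open>A2 > 0\<close> \<open>c > 0\<close> \<open>\<sigma> \<ge> 0\<close> \<open>t > 0\<close>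
    by (intro laurent_massart_threshold_le) (auto simp: \<sigma>_def A2_def)
  then have "emeasure M {\<omega> \<in> space M. t * \<sigma> < Z \<omega>}
      \<le> emeasure M {\<omega> \<in> space M. 2 * sqrt (A2 * x) + 2 * c * x \<le> Z \<omega>}"
    by (intro emeasure_mono) auto
  also have "\<dots> \<le> ennreal (exp (- x))"
    unfolding Z_def A2_def
    by (rule weighted_centered_chi_square_upper_tail[OF \<open>finite I\<close> ind dist]) (use assms in auto)
  finally have upper: "emeasure M {\<omega> \<in> space M. t * \<sigma> < Z \<omega>} \<le> ennreal (exp (- x))" .
  have "emeasure M {\<omega> \<in> space M. Z \<omega> < - (t / 2 * \<sigma>)}
      \<le> emeasure M {\<omega> \<in> space M. Z \<omega> \<le> - (t / 2 * \<sigma>)}"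
    by (intro emeasure_mono) auto
  also have "\<dots> \<le> ennreal (exp (- (t / 2 * \<sigma>)\<^sup>2 / (4 * A2)))"
    unfolding Z_def A2_def
    by (rule weighted_centered_chi_square_lower_tail[OF \<open>finite I\<close> ind dist])
      (use assms \<open>\<sigma> \<ge> 0\<close> in auto)
  also have "\<dots> \<le> ennreal (exp (- x))"
    using x_le(1) by (simp add: \<sigma>_def A2_def power2_eq_square field_simps)
  finally have lower: "emeasure M {\<omega> \<in> space M. Z \<omega> < - (t / 2 * \<sigma>)} \<le> ennreal (exp (- x))" .
  have "prob {\<omega> \<in> space M. Z \<omega> < - (t / 2 * \<sigma>) \<or> t * \<sigma> < Z \<omega>}
      \<le> prob {\<omega> \<in> space M. Z \<omega> < - (t / 2 * \<sigma>)} + prob {\<omega> \<in> space M. t * \<sigma> < Z \<omega>}"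
    by (rule prob_disj_le) measurable
  then show ?thesis
    using upper lower by (simp add: Z_def \<sigma>_def emeasure_eq_measure)
qed

end

section \<open>Gaussian matrices\<close>

lemma deviation_exponent_bounds:
  assumes "l2_norm N v > 0" "t > 0"
  defines "x \<equiv> min ((1/16) * (l2_norm N v ^ 4 / l4_norm N v ^ 4) * t\<^sup>2)
    ((1/4) * (l2_norm N v ^ 2 / linf_norm N v ^ 2) * t)"
  shows "x > 0" and "x \<le> t\<^sup>2 * (\<Sum>i<N. (v i)\<^sup>2)\<^sup>2 / (16 * (\<Sum>i<N. ((v i)\<^sup>2)\<^sup>2))"
    and "x \<le> t * (\<Sum>i<N. (v i)\<^sup>2) / (4 * (linf_norm N v)\<^sup>2)"
proof -
  have l2_sq: "l2_norm N v ^ 2 = (\<Sum>i<N. (v i)\<^sup>2)"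
    by (simp add: l2_norm_sq)
  have "l2_norm N v ^ 4 = (\<Sum>i<N. (v i)\<^sup>2)\<^sup>2" "l4_norm N v ^ 4 = (\<Sum>i<N. ((v i)\<^sup>2)\<^sup>2)"
    unfolding l2_sq[symmetric] by (simp_all add: l4_norm_pow4 flip: power_mult)
  moreover have "(\<Sum>i<N. (v i)\<^sup>2) > 0"
    using assms(1) by (simp flip: l2_sq)
  ultimately show "x > 0" "x \<le> t\<^sup>2 * (\<Sum>i<N. (v i)\<^sup>2)\<^sup>2 / (16 * (\<Sum>i<N. ((v i)\<^sup>2)\<^sup>2))"
    "x \<le> t * (\<Sum>i<N. (v i)\<^sup>2) / (4 * (linf_norm N v)\<^sup>2)"
    using assms(2) sum_pow4_pos[OF assms(1)] linf_norm_pos[OF assms(1)]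
    unfolding x_def l2_sq by (auto simp: field_simps min_le_iff_disj)
qed

context prob_space
begin

lemma std_normal_unit_lin_comb:
  fixes X :: "'i \<Rightarrow> 'a \<Rightarrow> real"
  assumes "finite J" and ind: "indep_vars (\<lambda>_. borel) X J"
    and dist: "\<And>j. j \<in> J \<Longrightarrow> distributed M lborel (X j) std_normal_density"
    and y: "(\<Sum>j\<in>J. (y j)\<^sup>2) = 1"
  shows "distributed M lborel (\<lambda>\<omega>. \<Sum>j\<in>J. y j * X j \<omega>) std_normal_density"
proof -
  define J' where "J' = {j \<in> J. y j \<noteq> 0}"
  have "J' \<subseteq> J" "finite J'" using \<open>finite J\<close> by (auto simp: J'_def)
  have sum_J': "(\<Sum>j\<in>J'. f j) = (\<Sum>j\<in>J. f j)" if "\<And>j. y j = 0 \<Longrightarrow> f j = 0" for f :: "'i \<Rightarrow> real"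
    using \<open>finite J\<close> that by (intro sum.mono_neutral_left) (auto simp: J'_def)
  then have "(\<Sum>j\<in>J'. (y j)\<^sup>2) = 1" using y by simp
  then have "J' \<noteq> {}" by auto
  have "distributed M lborel (\<lambda>\<omega>. y j * X j \<omega>) (normal_density 0 \<bar>y j\<bar>)" if "j \<in> J'" for j
    using normal_density_affine[OF dist, of j "y j" 0] that by (auto simp: J'_def)
  moreover have "indep_vars (\<lambda>_. borel) (\<lambda>j \<omega>. y j * X j \<omega>) J'"
    by (rule indep_vars_compose2[OF indep_vars_subset[OF ind \<open>J' \<subseteq> J\<close>]]) measurable
  ultimately have "distributed M lborel (\<lambda>\<omega>. \<Sum>j\<in>J'. y j * X j \<omega>)
      (normal_density (\<Sum>j\<in>J'. 0) (sqrt (\<Sum>j\<in>J'. \<bar>y j\<bar>\<^sup>2)))"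
    using \<open>finite J'\<close> \<open>J' \<noteq> {}\<close> by (intro sum_indep_normal) (auto simp: J'_def)
  then show ?thesis
    using \<open>(\<Sum>j\<in>J'. (y j)\<^sup>2) = 1\<close> sum_J'[of "\<lambda>j. y j * X j _"] by simp
qed

lemma indep_vars_blocks:
  assumes "indep_vars (\<lambda>_. borel) X I" "\<And>j. j \<in> J \<Longrightarrow> K j \<subseteq> I" "disjoint_family_on K J"
    and "\<And>j. j \<in> J \<Longrightarrow> f j \<in> borel_measurable (PiM (K j) (\<lambda>_. borel))"
  shows "indep_vars (\<lambda>_. borel) (\<lambda>j \<omega>. f j (\<lambda>i\<in>K j. X i \<omega>)) J"
  using indep_vars_compose2[OF indep_vars_restrict[OF assms(1-3)] assms(4)] by simp

lemma indep_vars_mat_vec: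
  assumes "indep_vars (\<lambda>_. borel) (\<lambda>p \<omega>. S \<omega> (fst p) (snd p)) ({..<N} \<times> {..<n})"
  shows "indep_vars (\<lambda>_. borel) (\<lambda>i \<omega>. mat_vec n (S \<omega>) y i) {..<N}"
proof -
  have blocks: "indep_vars (\<lambda>_. borel)
      (\<lambda>i \<omega>. (\<lambda>g. \<Sum>j<n. g (i, j) * y j) (\<lambda>p\<in>{i} \<times> {..<n}. S \<omega> (fst p) (snd p))) {..<N}"
    using assms by (rule indep_vars_blocks) (auto simp: disjoint_family_on_def)
  show ?thesis
    by (rule indep_vars_cong[THEN iffD1, OF refl _ refl blocks]) (auto simp: mat_vec_def fun_eq_iff)
qed

lemma distributed_mat_vec_std_normal:
  assumes ind: "indep_vars (\<lambda>_. borel) (\<lambda>p \<omega>. S \<omega> (fst p) (snd p)) ({..<N} \<times> {..<n})"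
    and dist: "\<And>i j. i < N \<Longrightarrow> j < n \<Longrightarrow> distributed M lborel (\<lambda>\<omega>. S \<omega> i j) std_normal_density"
    and "i < N" "y \<in> unit_vecs n"
  shows "distributed M lborel (\<lambda>\<omega>. mat_vec n (S \<omega>) y i) std_normal_density"
proof -
  have blocks: "indep_vars (\<lambda>_. borel) (\<lambda>j \<omega>. (\<lambda>g. g (i, j)) (\<lambda>p\<in>{(i, j)}. S \<omega> (fst p) (snd p))) {..<n}"
    by (rule indep_vars_blocks[OF ind]) (use \<open>i < N\<close> in \<open>auto simp: disjoint_family_on_def\<close>)
  have "indep_vars (\<lambda>_. borel) (\<lambda>j \<omega>. S \<omega> i j) {..<n}"
    by (rule indep_vars_cong[THEN iffD1, OF refl _ refl blocks]) auto
  then have "distributed M lborel (\<lambda>\<omega>. \<Sum>j<n. y j * S \<omega> i j) std_normal_density"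
    using dist \<open>i < N\<close> \<open>y \<in> unit_vecs n\<close>
    by (intro std_normal_unit_lin_comb) (auto simp: unit_vecs_def)
  then show ?thesis by (simp add: mat_vec_def mult.commute)
qed

lemma row_scaled_gaussian_deviation:
  assumes ind: "indep_vars (\<lambda>_. borel) (\<lambda>p \<omega>. S \<omega> (fst p) (snd p)) ({..<N} \<times> {..<n})"
    and dist: "\<And>i j. i < N \<Longrightarrow> j < n \<Longrightarrow> distributed M lborel (\<lambda>\<omega>. S \<omega> i j) std_normal_density"
    and "y \<in> unit_vecs n" "l2_norm N lam > 0" "t > 0"
  shows "prob {\<omega> \<in> space M. \<not> ((1 - t / 2) * (\<Sum>i<N. (lam i)\<^sup>2) \<le> (mat_vec_norm N n (\<lambda>i j. lam i * S \<omega> i j) y)\<^sup>2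
      \<and> (mat_vec_norm N n (\<lambda>i j. lam i * S \<omega> i j) y)\<^sup>2 \<le> (1 + t) * (\<Sum>i<N. (lam i)\<^sup>2))}
    \<le> 2 * exp (- min ((1/16) * (l2_norm N lam ^ 4 / l4_norm N lam ^ 4) * t\<^sup>2)
                     ((1/4) * (l2_norm N lam ^ 2 / linf_norm N lam ^ 2) * t))"
proof -
  have "(mat_vec_norm N n (\<lambda>i j. lam i * S \<omega> i j) y)\<^sup>2 - (\<Sum>i<N. (lam i)\<^sup>2)
      = (\<Sum>i<N. (lam i)\<^sup>2 * ((mat_vec n (S \<omega>) y i)\<^sup>2 - 1))" for \<omega>
    by (simp add: mat_vec_norm_row_scaled_sq algebra_simps sum_subtractf)
  then have eq: "{\<omega> \<in> space M. \<not> ((1 - t / 2) * (\<Sum>i<N. (lam i)\<^sup>2) \<le> (mat_vec_norm N n (\<lambda>i j. lam i * S \<omega> i j) y)\<^sup>2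
      \<and> (mat_vec_norm N n (\<lambda>i j. lam i * S \<omega> i j) y)\<^sup>2 \<le> (1 + t) * (\<Sum>i<N. (lam i)\<^sup>2))}
    = {\<omega> \<in> space M. (\<Sum>i<N. (lam i)\<^sup>2 * ((mat_vec n (S \<omega>) y i)\<^sup>2 - 1)) < - (t / 2 * (\<Sum>i<N. (lam i)\<^sup>2))
      \<or> t * (\<Sum>i<N. (lam i)\<^sup>2) < (\<Sum>i<N. (lam i)\<^sup>2 * ((mat_vec n (S \<omega>) y i)\<^sup>2 - 1))}"
    by (auto simp: algebra_simps simp flip: diff_less_eq less_diff_eq)
  show ?thesis
    unfolding eq
  proof (rule weighted_centered_chi_square_deviation[OF _ indep_vars_mat_vec[OF ind]])
    show "distributed M lborel (\<lambda>\<omega>. mat_vec n (S \<omega>) y i) std_normal_density" if "i \<in> {..<N}" for i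
      using that by (intro distributed_mat_vec_std_normal[OF ind dist _ \<open>y \<in> unit_vecs n\<close>]) auto
    show "0 \<le> (lam i)\<^sup>2 \<and> (lam i)\<^sup>2 \<le> (linf_norm N lam)\<^sup>2" if "i \<in> {..<N}" for i
      using power_mono[OF abs_le_linf_norm abs_ge_zero, of i N lam 2] that by simp
  qed (rule sum_pow4_pos[OF assms(4)] assms(5) deviation_exponent_bounds[OF assms(4,5)]
      | use linf_norm_pos[OF assms(4)] in simp)+
qed

lemma prob_ge_one_minus_union_bound:
  assumes "finite F" "E \<in> events" "\<And>y. y \<in> F \<Longrightarrow> B y \<in> events" "\<And>y. y \<in> F \<Longrightarrow> prob (B y) \<le> p"
    and "space M - (\<Union>y\<in>F. B y) \<subseteq> E"
  shows "1 - real (card F) * p \<le> prob E"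
proof -
  have "1 - real (card F) * p \<le> 1 - (\<Sum>y\<in>F. prob (B y))"
    using sum_mono[of F "\<lambda>y. prob (B y)" "\<lambda>_. p"] assms(4) by simp
  also have "\<dots> \<le> 1 - prob (\<Union>y\<in>F. B y)"
    using assms(1,3) by (simp add: finite_measure_subadditive_finite image_subset_iff)
  also have "\<dots> = prob (space M - (\<Union>y\<in>F. B y))"
    using assms(1,3) by (subst prob_compl) auto
  also have "\<dots> \<le> prob E"
    using assms(2,5) by (rule finite_measure_mono[rotated])
  finally show ?thesis .
qed

lemma singular_values_concentration_of_net:
  assumes "1 \<le> n" "0 < t" "t < 1" "0 \<le> \<sigma>"
    and A: "\<And>i j. i < N \<Longrightarrow> j < n \<Longrightarrow> (\<lambda>\<omega>. A \<omega> i j) \<in> borel_measurable M"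
    and deviation: "\<And>y. y \<in> unit_vecs n \<Longrightarrow> prob {\<omega> \<in> space M.
      \<not> ((1 - t / 2) * \<sigma> \<le> (mat_vec_norm N n (A \<omega>) y)\<^sup>2 \<and> (mat_vec_norm N n (A \<omega>) y)\<^sup>2 \<le> (1 + t) * \<sigma>)} \<le> p"
  shows "1 - real (card (unit_net n (1 / 4))) * p \<le> prob {\<omega> \<in> space M.
    (1 - t) * sqrt \<sigma> \<le> s_min N n (A \<omega>) \<and> s_min N n (A \<omega>) \<le> s_max N n (A \<omega>)
    \<and> s_max N n (A \<omega>) \<le> (1 + t) * sqrt \<sigma>}"
proof -
  define bad where "bad y = {\<omega> \<in> space M. \<not> ((1 - t / 2) * \<sigma> \<le> (mat_vec_norm N n (A \<omega>) y)\<^sup>2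
    \<and> (mat_vec_norm N n (A \<omega>) y)\<^sup>2 \<le> (1 + t) * \<sigma>)}" for y
  have [measurable]: "(\<lambda>\<omega>. mat_vec_norm N n (A \<omega>) y) \<in> borel_measurable M" for y
    using A by (rule borel_measurable_mat_vec_norm)
  show ?thesis
  proof (rule prob_ge_one_minus_union_bound[where B = bad])
    show "bad y \<in> events" for y
      unfolding bad_def by measurable
    show "prob (bad y) \<le> p" if "y \<in> unit_net n (1 / 4)" for y
      unfolding bad_def using that unit_net_subset[of "1 / 4" n] by (intro deviation) auto
    show "space M - (\<Union>y\<in>unit_net n (1 / 4). bad y) \<subseteq> {\<omega> \<in> space M. (1 - t) * sqrt \<sigma> \<le> s_min N n (A \<omega>)
        \<and> s_min N n (A \<omega>) \<le> s_max N n (A \<omega>) \<and> s_max N n (A \<omega>) \<le> (1 + t) * sqrt \<sigma>}"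
      using singular_values_bounds_of_net[OF assms(1-4) unit_net_subset unit_net_covers]
      by (auto simp: bad_def)
  qed (use assms(1) A in \<open>simp_all add: finite_unit_net singular_value_bounds_measurable\<close>)
qed

end

theorem lemma7:
  fixes M :: "'a measure" and S :: "'a \<Rightarrow> nat \<Rightarrow> nat \<Rightarrow> real"
    and lam :: "nat \<Rightarrow> real" and N n :: nat and t :: real
  assumes "prob_space M"
    and "1 \<le> n" and "n \<le> N"
    and "\<And>i. i < N \<Longrightarrow> lam i \<ge> 0"
    and "l2_norm N lam > 0"
    and "prob_space.indep_vars M (\<lambda>_. borel) (\<lambda>p \<omega>. S \<omega> (fst p) (snd p)) ({..<N} \<times> {..<n})"
    and "\<And>i j. i < N \<Longrightarrow> j < n \<Longrightarrow> distributed M lborel (\<lambda>\<omega>. S \<omega> i j) std_normal_density"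
    and "t < 1"
  shows "measure M {\<omega> \<in> space M.
            (1 - t) * sqrt (\<Sum>i<N. (lam i)\<^sup>2) \<le> s_min N n (\<lambda>i j. lam i * S \<omega> i j)
          \<and> s_min N n (\<lambda>i j. lam i * S \<omega> i j) \<le> s_max N n (\<lambda>i j. lam i * S \<omega> i j)
          \<and> s_max N n (\<lambda>i j. lam i * S \<omega> i j) \<le> (1 + t) * sqrt (\<Sum>i<N. (lam i)\<^sup>2)}
       \<ge> 1 - 9 ^ n * 2 * exp (- min ((1/16) * (l2_norm N lam ^ 4 / l4_norm N lam ^ 4) * t\<^sup>2)
                                    ((1/4) * (l2_norm N lam ^ 2 / linf_norm N lam ^ 2) * t))"
  (is "measure M ?good \<ge> 1 - 9 ^ n * 2 * exp (- ?x)")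
proof -
  interpret prob_space M by (rule assms(1))
  show ?thesis
  proof (cases "t \<le> 0")
    case True
    then have "?x \<le> 0" by (intro min.coboundedI2 mult_nonneg_nonpos) auto
    then have "1 * 1 \<le> 9 ^ n * exp (- ?x)" by (intro mult_mono) auto
    then show ?thesis using measure_nonneg[of M ?good] by linarith
  next
    case False
    have "1 - real (card (unit_net n (1 / 4))) * (2 * exp (- ?x)) \<le> prob ?good"
    proof (rule singular_values_concentration_of_net[OF assms(2) _ assms(8)])
      show "(\<lambda>\<omega>. lam i * S \<omega> i j) \<in> borel_measurable M" if "i < N" "j < n" for i j
        using distributed_measurable[OF assms(7)[OF that]] by simp
    qed (rule row_scaled_gaussian_deviation assms(5-7) | use False in \<open>simp add: sum_nonneg\<close>)+
    moreover have "real (card (unit_net n (1 / 4))) * (2 * exp (- ?x)) \<le> 9 ^ n * 2 * exp (- ?x)"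
      using card_unit_net_le[of "1 / 4" n] by (simp add: mult_right_mono)
    ultimately show ?thesis by linarith
  qed
qed

end
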